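(* Let $N\ge1$, $q$ real with $0<|q|<1$, and $0<r<\frac{1-|q|}{|1-q|}$. For the $N$-particle $q$-TAZRP started from $Y=(y_N,\dots,y_1)\in\mathbf{S}$, for every $x\in\mathbb{Z}$ and $t\ge0$, $$\mathbb{P}_Y(x_N(t)=x)=\Big(\frac{1}{2\pi i}\Big)^N\oint_{\mathcal{C}_r}\cdots\oint_{\mathcal{C}_r}I(z_1,\dots,z_N)\prod_{i=1}^N z_i^{x-y_i-1}e^{\epsilon(z_i)t}\,dz_1\cdots dz_N,$$ where $$I(z_1,\dots,z_N)=\prod_{1\le i<j\le N}\frac{z_i-z_j}{z_i-qz_j-(1-q)z_iz_j}\cdot\frac{1-\prod_{i=1}^N z_i}{\prod_{i=1}^N(1-z_i)}$$ and $\epsilon(z)=\frac1z-1$.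
   Context: $[k]_q=1+q+\cdots+q^{k-1}$. $\mathbf{S}=\{(x_N,\dots,x_1)\in\mathbb{Z}^N:x_N\le\cdots\le x_1\}$ is the set of configurations of $N$ indistinguishable particles on $\mathbb{Z}$. The $q$-TAZRP is the continuous-time Markov chain on $\mathbf{S}$ in which, independently for each occupied site $\mathbf{x}$ holding $k$ particles, one particle jumps from $\mathbf{x}$ to $\mathbf{x}+1$ at rate $[k]_q$. $x_N(t)$ denotes the position of the left-most particle at time $t$, and $\mathbb{P}_Y$ the law of the process started at $Y$. $\mathcal{C}_r$ is the positively oriented circle of radius $r$ about $0$. *)

theory Defs
  imports "HOL-Analysis.Analysis" "HOL-Library.Multiset"
begin

definition qint :: "real \<Rightarrow> nat \<Rightarrow> real" where
  "qint q k = (\<Sum>i<k. q ^ i)"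

text \<open>Configurations of indistinguishable particles on Z are multisets of sites.\<close>
definition tazrp_gen :: "real \<Rightarrow> (int multiset \<Rightarrow> real) \<Rightarrow> int multiset \<Rightarrow> real" where
  "tazrp_gen q f X = (\<Sum>s\<in>set_mset X. qint q (count X s) *
       (f (add_mset (s + 1) (X - {#s#})) - f X))"

text \<open>Expectation E_X[f(X(t))] of the (bounded-rate) chain, via the transition semigroup
  exp(t L) = sum_n t^n/n! L^n.\<close>
definition tazrp_expect :: "real \<Rightarrow> real \<Rightarrow> (int multiset \<Rightarrow> real) \<Rightarrow> int multiset \<Rightarrow> real" where
  "tazrp_expect q t f X = (\<Sum>n. t ^ n / fact n * ((tazrp_gen q ^^ n) f) X)"

text \<open>P_Y(x_N(t) = x): probability that the left-most particle is at x at time t.\<close>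
definition leftmost_prob :: "real \<Rightarrow> int multiset \<Rightarrow> real \<Rightarrow> int \<Rightarrow> real" where
  "leftmost_prob q Y t x =
     tazrp_expect q t (\<lambda>X. if Min (set_mset X) = x then 1 else 0) Y"

text \<open>(1/(2 pi i)) times the contour integral over the positively oriented circle of
  radius r about 0, parametrised by z = r e^{i theta}, dz = i r e^{i theta} d theta.\<close>
definition circ_int :: "real \<Rightarrow> (complex \<Rightarrow> complex) \<Rightarrow> complex" where
  "circ_int r g = (1 / (2 * pi * \<i>)) *
     integral {0..2*pi} (\<lambda>\<theta>. g (of_real r * cis \<theta>) * (\<i> * of_real r * cis \<theta>))"

fun circ_int_n :: "real \<Rightarrow> nat \<Rightarrow> (complex list \<Rightarrow> complex) \<Rightarrow> complex" where
  "circ_int_n r 0 F = F []"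
| "circ_int_n r (Suc n) F = circ_int r (\<lambda>z. circ_int_n r n (\<lambda>zs. F (z # zs)))"

text \<open>The function I(z_1,...,z_N), with z_i = zs ! (i-1).\<close>
definition I_fun :: "real \<Rightarrow> nat \<Rightarrow> complex list \<Rightarrow> complex" where
  "I_fun q N zs =
     (\<Prod>i<N. \<Prod>j\<in>{i<..<N}. (zs!i - zs!j) /
         (zs!i - of_real q * zs!j - (1 - of_real q) * zs!i * zs!j)) *
     ((1 - (\<Prod>i<N. zs!i)) / (\<Prod>i<N. (1 - zs!i)))"

definition eps :: "complex \<Rightarrow> complex" where
  "eps z = 1 / z - 1"

end

theory Submission
  imports Defs "HOL-Complex_Analysis.Complex_Analysis"
begin

text \<open>
  Write \<open>U\<^sub>n(Y)\<close> for the contour integral of \<open>I(z) \<Prod>\<^sub>i z\<^sub>i\<^bsup>x-y\<^sub>i-1\<^esup>\<close> times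
  \<open>(\<Sum>\<^sub>i eps z\<^sub>i)\<^sup>n\<close>. Since the exponentials in the formula combine to \<open>exp (t \<Sum>\<^sub>i eps z\<^sub>i)\<close>,
  the right-hand side is \<open>\<Sum>\<^sub>n t\<^sup>n/n! U\<^sub>n(Y)\<close> (the series may be integrated termwise, the
  integrand being bounded on the torus), while the left-hand side is \<open>\<Sum>\<^sub>n t\<^sup>n/n! (L\<^sup>n f)(Y)\<close>
  for the generator \<open>L\<close> and \<open>f = [min = x]\<close>. So it suffices to show \<open>U\<^sub>0 = f\<close> and
  \<open>U\<^sub>n\<^sub>+\<^sub>1 = L U\<^sub>n\<close>.

  \<open>U\<^sub>0 = f\<close> is a residue computation. If the rightmost particle is right of \<open>x\<close>, inverting its
  variable leaves only the pole at \<open>z = 1\<close>, whose residue removes that particle; if the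
  leftmost particle is left of \<open>x\<close>, the integrand is holomorphic in its variable inside the
  circle; if all particles sit at \<open>x\<close>, only the poles at \<open>0\<close> contribute, and they give \<open>1\<close>.

  For \<open>U\<^sub>n\<^sub>+\<^sub>1 = L U\<^sub>n\<close>, split \<open>\<Sum>\<^sub>i eps z\<^sub>i\<close>: multiplying by \<open>eps z\<^sub>i = 1/z\<^sub>i - 1\<close> moves particle
  \<open>i\<close> one step to the right. For particles \<open>i, i+1\<close> at the same site the pair factor turns
  \<open>eps z\<^sub>i\<^sub>+\<^sub>1 - q eps z\<^sub>i\<close> into the antisymmetric \<open>eps z\<^sub>i\<^sub>+\<^sub>1 - eps z\<^sub>i\<close>, so the two terms are in
  ratio \<open>q\<close>, and a block of \<open>k\<close> particles contributes \<open>[k]\<^sub>q\<close> times the jump of its first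
  particle, which is the rate of the \<open>q\<close>-TAZRP.
\<close>

section \<open>Continuity on the torus\<close>

definition torus :: "real \<Rightarrow> nat \<Rightarrow> complex list set" where
  "torus r n = {zs. length zs = n \<and> (\<forall>z\<in>set zs. cmod z = r)}"

definition list_tendsto :: "(nat \<Rightarrow> complex list) \<Rightarrow> complex list \<Rightarrow> bool" where
  "list_tendsto S zs \<longleftrightarrow> (\<forall>i<length zs. (\<lambda>k. S k ! i) \<longlonglongrightarrow> zs ! i)"

text \<open>Lists carry no topology, so continuity on the torus is expressed through coordinatewise
  convergent sequences. Boundedness is built in because it is what the integral estimates use.\<close>
definition torus_continuous :: "real \<Rightarrow> nat \<Rightarrow> (complex list \<Rightarrow> complex) \<Rightarrow> bool" where
  "torus_continuous r n F \<longleftrightarrow> (\<exists>B. \<forall>zs\<in>torus r n. cmod (F zs) \<le> B) \<and>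
     (\<forall>zs\<in>torus r n. \<forall>S. (\<forall>k. S k \<in> torus r n) \<longrightarrow> list_tendsto S zs \<longrightarrow>
        (\<lambda>k. F (S k)) \<longlonglongrightarrow> F zs)"

lemma torus_Cons [simp]: "z # zs \<in> torus r (Suc n) \<longleftrightarrow> cmod z = r \<and> zs \<in> torus r n"
  by (auto simp: torus_def)

lemma torus_snoc: "zs \<in> torus r n \<Longrightarrow> cmod z = r \<Longrightarrow> zs @ [z] \<in> torus r (Suc n)"
  by (auto simp: torus_def)

lemma torus_length: "zs \<in> torus r n \<Longrightarrow> length zs = n"
  by (simp add: torus_def)

lemma torus_nth: "zs \<in> torus r n \<Longrightarrow> i < n \<Longrightarrow> cmod (zs ! i) = r"
  using nth_mem[of i zs] by (auto simp: torus_def)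

lemma torus_nth_nonzero: "zs \<in> torus r n \<Longrightarrow> i < n \<Longrightarrow> r > 0 \<Longrightarrow> zs ! i \<noteq> 0"
  using torus_nth by force

lemma torus_iff_nth: "zs \<in> torus r n \<longleftrightarrow> length zs = n \<and> (\<forall>i<n. cmod (zs ! i) = r)"
  unfolding torus_def set_conv_nth by auto

lemma list_tendsto_const [simp]: "list_tendsto (\<lambda>k. zs) zs"
  by (simp add: list_tendsto_def)

lemma list_tendsto_append:
  assumes "list_tendsto S xs" "list_tendsto T ys" "\<And>k. length (S k) = length xs"
  shows "list_tendsto (\<lambda>k. S k @ T k) (xs @ ys)"
  using assms by (auto simp: list_tendsto_def nth_append)

lemma list_tendsto_Cons:
  assumes "s \<longlonglongrightarrow> z" "list_tendsto T ys"
  shows "list_tendsto (\<lambda>k. s k # T k) (z # ys)"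
  using assms unfolding list_tendsto_def by (auto simp: nth_Cons split: nat.splits)

lemma list_tendsto_single: "s \<longlonglongrightarrow> z \<Longrightarrow> list_tendsto (\<lambda>k. [s k]) [z]"
  by (simp add: list_tendsto_def)

lemma torus_continuousI:
  assumes "\<And>zs. zs \<in> torus r n \<Longrightarrow> cmod (F zs) \<le> B"
    and "\<And>zs S. zs \<in> torus r n \<Longrightarrow> (\<And>k. S k \<in> torus r n) \<Longrightarrow> list_tendsto S zs \<Longrightarrow>
           (\<lambda>k. F (S k)) \<longlonglongrightarrow> F zs"
  shows "torus_continuous r n F"
  using assms unfolding torus_continuous_def by blast

lemma torus_continuous_bounded:
  "torus_continuous r n F \<Longrightarrow> \<exists>B>0. \<forall>zs\<in>torus r n. cmod (F zs) \<le> B"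
proof -
  assume "torus_continuous r n F"
  then obtain B where "\<forall>zs\<in>torus r n. cmod (F zs) \<le> B"
    unfolding torus_continuous_def by blast
  then show ?thesis
    by (intro exI[of _ "max B 1"]) force
qed

lemma torus_continuous_tendsto:
  "torus_continuous r n F \<Longrightarrow> zs \<in> torus r n \<Longrightarrow> (\<And>k. S k \<in> torus r n) \<Longrightarrow>
    list_tendsto S zs \<Longrightarrow> (\<lambda>k. F (S k)) \<longlonglongrightarrow> F zs"
  unfolding torus_continuous_def by blast

lemma torus_continuous_const: "torus_continuous r n (\<lambda>_. c)"
  by (rule torus_continuousI[of _ _ _ "cmod c"]) auto

lemma torus_continuous_nth: "i < n \<Longrightarrow> torus_continuous r n (\<lambda>zs. zs ! i)"
  by (rule torus_continuousI[of _ _ _ r]) (auto simp: torus_nth list_tendsto_def torus_length)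

lemma torus_continuous_add:
  assumes F: "torus_continuous r n F" and G: "torus_continuous r n G"
  shows "torus_continuous r n (\<lambda>zs. F zs + G zs)"
proof -
  obtain B1 B2 where "\<forall>zs\<in>torus r n. cmod (F zs) \<le> B1" "\<forall>zs\<in>torus r n. cmod (G zs) \<le> B2"
    using torus_continuous_bounded[OF F] torus_continuous_bounded[OF G] by blast
  then show ?thesis
    by (intro torus_continuousI[of _ _ _ "B1 + B2"] tendsto_add
          torus_continuous_tendsto[OF F] torus_continuous_tendsto[OF G])
       (auto intro: norm_triangle_le add_mono)
qed

lemma torus_continuous_mult:
  assumes F: "torus_continuous r n F" and G: "torus_continuous r n G"
  shows "torus_continuous r n (\<lambda>zs. F zs * G zs)"
proof -
  obtain B1 B2 where "\<forall>zs\<in>torus r n. cmod (F zs) \<le> B1" "\<forall>zs\<in>torus r n. cmod (G zs) \<le> B2"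
    "B1 > 0" "B2 > 0"
    using torus_continuous_bounded[OF F] torus_continuous_bounded[OF G] by blast
  then show ?thesis
    by (intro torus_continuousI[of _ _ _ "B1 * B2"] tendsto_mult
          torus_continuous_tendsto[OF F] torus_continuous_tendsto[OF G])
       (auto simp: norm_mult intro: mult_mono)
qed

lemma torus_continuous_diff:
  assumes "torus_continuous r n F" "torus_continuous r n G"
  shows "torus_continuous r n (\<lambda>zs. F zs - G zs)"
  using torus_continuous_add[OF assms(1) torus_continuous_mult[OF torus_continuous_const assms(2)],
      of "-1"]
  by simp

lemma torus_continuous_sum:
  "(\<And>i. i \<in> A \<Longrightarrow> torus_continuous r n (F i)) \<Longrightarrow> torus_continuous r n (\<lambda>zs. \<Sum>i\<in>A. F i zs)"
  by (induction A rule: infinite_finite_induct)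
     (auto intro: torus_continuous_const torus_continuous_add)

lemma torus_continuous_prod:
  "(\<And>i. i \<in> A \<Longrightarrow> torus_continuous r n (F i)) \<Longrightarrow> torus_continuous r n (\<lambda>zs. \<Prod>i\<in>A. F i zs)"
  by (induction A rule: infinite_finite_induct)
     (auto intro: torus_continuous_const torus_continuous_mult)

lemma torus_continuous_power:
  "torus_continuous r n F \<Longrightarrow> torus_continuous r n (\<lambda>zs. F zs ^ m)"
  by (induction m) (auto intro: torus_continuous_const torus_continuous_mult)

lemma torus_continuous_divide:
  assumes F: "torus_continuous r n F" and G: "torus_continuous r n G" and "d > 0"
    and G_ge: "\<And>zs. zs \<in> torus r n \<Longrightarrow> cmod (G zs) \<ge> d"
  shows "torus_continuous r n (\<lambda>zs. F zs / G zs)"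
proof -
  have "torus_continuous r n (\<lambda>zs. inverse (G zs))"
  proof (rule torus_continuousI[of _ _ _ "1 / d"])
    show "cmod (inverse (G zs)) \<le> 1 / d" if "zs \<in> torus r n" for zs
      using G_ge[OF that] \<open>d > 0\<close> by (simp add: norm_inverse le_imp_inverse_le flip: inverse_eq_divide)
    show "(\<lambda>k. inverse (G (S k))) \<longlonglongrightarrow> inverse (G zs)"
      if "zs \<in> torus r n" "\<And>k. S k \<in> torus r n" "list_tendsto S zs" for zs S
      using that torus_continuous_tendsto[OF G] G_ge[of zs] \<open>d > 0\<close> by (intro tendsto_inverse) auto
  qed
  from torus_continuous_mult[OF F this] show ?thesis
    by (simp add: divide_inverse)
qed

lemma torus_continuous_exp:
  assumes F: "torus_continuous r n F"
  shows "torus_continuous r n (\<lambda>zs. exp (F zs))"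
proof -
  obtain B where "\<forall>zs\<in>torus r n. cmod (F zs) \<le> B"
    using torus_continuous_bounded[OF F] by blast
  then show ?thesis
    by (intro torus_continuousI[of _ _ _ "exp B"] tendsto_exp torus_continuous_tendsto[OF F])
       (auto intro: order_trans[OF complex_Re_le_cmod])
qed

lemma torus_continuous_powi_nth:
  assumes "i < n" "r > 0"
  shows "torus_continuous r n (\<lambda>zs. (zs ! i) powi m)"
proof (rule torus_continuousI[of _ _ _ "r powi m"])
  show "cmod ((zs ! i) powi m) \<le> r powi m" if "zs \<in> torus r n" for zs
    using assms that by (simp add: norm_power_int torus_nth)
  show "(\<lambda>k. (S k ! i) powi m) \<longlonglongrightarrow> (zs ! i) powi m"
    if "zs \<in> torus r n" "list_tendsto S zs" for zs S
    using assms that torus_nth_nonzero[OF that(1)]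
    by (intro tendsto_power_int) (auto simp: list_tendsto_def torus_length)
qed

lemma torus_continuous_compose:
  assumes F: "torus_continuous r m F"
    and g: "\<And>zs. zs \<in> torus r n \<Longrightarrow> g zs \<in> torus r m"
    and g_tendsto: "\<And>zs S. zs \<in> torus r n \<Longrightarrow> (\<And>k. S k \<in> torus r n) \<Longrightarrow> list_tendsto S zs \<Longrightarrow>
        list_tendsto (\<lambda>k. g (S k)) (g zs)"
  shows "torus_continuous r n (\<lambda>zs. F (g zs))"
proof -
  obtain B where "\<forall>zs\<in>torus r m. cmod (F zs) \<le> B"
    using torus_continuous_bounded[OF F] by blast
  then show ?thesis
    by (intro torus_continuousI[of _ _ _ B]) (use g g_tendsto torus_continuous_tendsto[OF F] in auto)
qed

lemma torus_continuous_prefix: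
  assumes "torus_continuous r (m + n) F" "ps \<in> torus r m"
  shows "torus_continuous r n (\<lambda>zs. F (ps @ zs))"
  by (rule torus_continuous_compose[OF assms(1)])
     (use assms(2) in \<open>auto simp: torus_def intro: list_tendsto_append\<close>)

lemma torus_continuous_Cons:
  "torus_continuous r (Suc n) F \<Longrightarrow> cmod z = r \<Longrightarrow> torus_continuous r n (\<lambda>zs. F (z # zs))"
  using torus_continuous_prefix[of r 1 n F "[z]"] by (simp add: torus_def)

lemmas torus_continuous_intros =
  torus_continuous_const torus_continuous_nth torus_continuous_add torus_continuous_mult
  torus_continuous_diff torus_continuous_sum torus_continuous_prod torus_continuous_power
  torus_continuous_exp torus_continuous_powi_nth

section \<open>Iterated circle integrals\<close>

definition circ_integrand :: "real \<Rightarrow> (complex \<Rightarrow> complex) \<Rightarrow> real \<Rightarrow> complex" where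
  "circ_integrand r g \<theta> = g (of_real r * cis \<theta>) * (\<i> * of_real r * cis \<theta>)"

lemma circ_int_integral: "circ_int r g = (1 / (2 * pi * \<i>)) * integral {0..2*pi} (circ_integrand r g)"
  by (simp add: circ_int_def circ_integrand_def[abs_def])

lemma circ_int_cong:
  assumes "r \<ge> 0" "\<And>z. cmod z = r \<Longrightarrow> g z = h z"
  shows "circ_int r g = circ_int r h"
  unfolding circ_int_def using assms by (simp add: norm_mult)

lemma circ_int_n_cong:
  assumes "r \<ge> 0" "\<And>zs. zs \<in> torus r n \<Longrightarrow> F zs = G zs"
  shows "circ_int_n r n F = circ_int_n r n G"
  using assms(2)
proof (induction n arbitrary: F G)
  case 0
  then show ?case by (simp add: torus_def)
next
  case (Suc n)
  show ?case
    by (simp, rule circ_int_cong[OF assms(1)], rule Suc.IH) (use Suc.prems in auto)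
qed

lemma circ_int_n_snoc:
  "circ_int_n r (Suc n) F = circ_int_n r n (\<lambda>zs. circ_int r (\<lambda>z. F (zs @ [z])))"
proof (induction n arbitrary: F)
  case 0
  then show ?case by simp
next
  case (Suc n)
  have "circ_int_n r (Suc (Suc n)) F = circ_int r (\<lambda>z. circ_int_n r (Suc n) (\<lambda>zs. F (z # zs)))"
    by (simp only: circ_int_n.simps)
  also have "\<dots> = circ_int r (\<lambda>z. circ_int_n r n (\<lambda>zs. circ_int r (\<lambda>w. F (z # zs @ [w]))))"
    by (simp only: Suc.IH append_Cons)
  finally show ?case
    by (simp only: circ_int_n.simps append_Cons)
qed

lemma circ_int_cmult: "circ_int r (\<lambda>z. c * f z) = c * circ_int r f"
proof -
  have "circ_integrand r (\<lambda>z. c * f z) = (\<lambda>t. c * circ_integrand r f t)"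
    by (auto simp: circ_integrand_def algebra_simps)
  then show ?thesis
    by (simp add: circ_int_integral)
qed

lemma circ_int_add:
  assumes "circ_integrand r f integrable_on {0..2*pi}" "circ_integrand r g integrable_on {0..2*pi}"
  shows "circ_int r (\<lambda>z. f z + g z) = circ_int r f + circ_int r g"
proof -
  have "circ_integrand r (\<lambda>z. f z + g z) = (\<lambda>t. circ_integrand r f t + circ_integrand r g t)"
    by (auto simp: circ_integrand_def algebra_simps)
  then show ?thesis
    using assms by (simp add: circ_int_integral integral_add distrib_left)
qed

lemma circ_int_norm_le:
  assumes "circ_integrand r g integrable_on {0..2*pi}" "r \<ge> 0" "\<And>z. cmod z = r \<Longrightarrow> cmod (g z) \<le> B"
  shows "cmod (circ_int r g) \<le> r * B"
proof -
  have "norm (integral {0..2*pi} (circ_integrand r g)) \<le> integral {0..2*pi} (\<lambda>_. r * B)"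
  proof (rule integral_norm_bound_integral[OF assms(1)])
    fix t
    have "cmod (g (of_real r * cis t)) \<le> B"
      using assms(2,3) by (simp add: norm_mult)
    from mult_left_mono[OF this assms(2)] show "norm (circ_integrand r g t) \<le> r * B"
      using assms(2) by (simp add: circ_integrand_def norm_mult mult.commute)
  qed auto
  then show ?thesis
    by (simp add: circ_int_integral norm_mult norm_divide divide_simps mult_ac)
qed

lemma continuous_on_torus_snoc:
  assumes F: "torus_continuous r (Suc m) F" and ps: "ps \<in> torus r m" and "r \<ge> 0"
  shows "continuous_on A (\<lambda>\<theta>. F (ps @ [of_real r * cis \<theta>]))"
proof (rule continuous_on_sequentiallyI)
  fix u :: "nat \<Rightarrow> real" and a assume "u \<longlonglongrightarrow> a"
  then have "list_tendsto (\<lambda>k. ps @ [of_real r * cis (u k)]) (ps @ [of_real r * cis a])"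
    by (intro list_tendsto_append list_tendsto_single tendsto_intros) (auto simp: torus_length[OF ps])
  then show "(\<lambda>n. F (ps @ [of_real r * cis (u n)])) \<longlonglongrightarrow> F (ps @ [of_real r * cis a])"
    using \<open>r \<ge> 0\<close> by (intro torus_continuous_tendsto[OF F] torus_snoc[OF ps]) (auto simp: norm_mult)
qed

lemma circ_integrand_integrable_snoc:
  assumes "torus_continuous r (Suc m) F" "ps \<in> torus r m" "r \<ge> 0"
  shows "circ_integrand r (\<lambda>z. F (ps @ [z])) integrable_on {0..2*pi}"
  unfolding circ_integrand_def
  by (intro integrable_continuous_interval continuous_intros continuous_on_torus_snoc[OF assms])

lemma torus_continuous_circ_int_snoc:
  assumes F: "torus_continuous r (Suc m) F" and r: "r \<ge> 0"
  shows "torus_continuous r m (\<lambda>ps. circ_int r (\<lambda>z. F (ps @ [z])))"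
proof -
  obtain B where B: "\<forall>zs\<in>torus r (Suc m). cmod (F zs) \<le> B"
    using torus_continuous_bounded[OF F] by blast
  have integrand_le: "norm (circ_integrand r (\<lambda>z. F (ps @ [z])) t) \<le> r * B" if "ps \<in> torus r m" for ps t
  proof -
    have "cmod (F (ps @ [of_real r * cis t])) \<le> B"
      using B torus_snoc[OF that, of "of_real r * cis t"] r by (simp add: norm_mult)
    from mult_left_mono[OF this r] show ?thesis
      using r by (simp add: circ_integrand_def norm_mult mult.commute)
  qed
  show ?thesis
  proof (rule torus_continuousI[of _ _ _ "r * B"])
    fix ps assume ps: "ps \<in> torus r m"
    show "cmod (circ_int r (\<lambda>z. F (ps @ [z]))) \<le> r * B"
      by (rule circ_int_norm_le[OF circ_integrand_integrable_snoc[OF F ps r] r])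
         (use B torus_snoc[OF ps] in auto)
  next
    fix ps S assume ps: "ps \<in> torus r m" and S: "\<And>k. S k \<in> torus r m" and L: "list_tendsto S ps"
    have "(\<lambda>k. integral {0..2*pi} (circ_integrand r (\<lambda>z. F (S k @ [z])))) \<longlonglongrightarrow>
        integral {0..2*pi} (circ_integrand r (\<lambda>z. F (ps @ [z])))"
    proof (rule dominated_convergence(2))
      show "circ_integrand r (\<lambda>z. F (S k @ [z])) integrable_on {0..2*pi}" for k
        by (rule circ_integrand_integrable_snoc[OF F S r])
      show "norm (circ_integrand r (\<lambda>z. F (S k @ [z])) t) \<le> r * B" for k t
        by (rule integrand_le[OF S])
      show "(\<lambda>k. circ_integrand r (\<lambda>z. F (S k @ [z])) t) \<longlonglongrightarrow> circ_integrand r (\<lambda>z. F (ps @ [z])) t"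
        for t
        unfolding circ_integrand_def
        using r L torus_length[OF S] torus_length[OF ps]
        by (intro tendsto_intros torus_continuous_tendsto[OF F] torus_snoc[OF ps] torus_snoc[OF S]
              list_tendsto_append) (auto simp: norm_mult)
    qed auto
    then show "(\<lambda>k. circ_int r (\<lambda>z. F (S k @ [z]))) \<longlonglongrightarrow> circ_int r (\<lambda>z. F (ps @ [z]))"
      unfolding circ_int_integral by (intro tendsto_intros)
  qed
qed

lemma torus_continuous_circ_int_n_append:
  assumes "torus_continuous r (m + n) F" "r \<ge> 0"
  shows "torus_continuous r m (\<lambda>ps. circ_int_n r n (\<lambda>zs. F (ps @ zs)))"
  using assms(1)
proof (induction n arbitrary: m)
  case 0
  then show ?case by simp
next
  case (Suc n)
  have "torus_continuous r (Suc m) (\<lambda>ps. circ_int_n r n (\<lambda>zs. F (ps @ zs)))"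
    by (rule Suc.IH) (use Suc.prems in simp)
  from torus_continuous_circ_int_snoc[OF this assms(2)] show ?case
    by simp
qed

lemma circ_integrand_integrable_Cons:
  assumes "torus_continuous r (Suc n) F" "r \<ge> 0"
  shows "circ_integrand r (\<lambda>z. circ_int_n r n (\<lambda>zs. F (z # zs))) integrable_on {0..2*pi}"
proof -
  have "torus_continuous r 1 (\<lambda>ps. circ_int_n r n (\<lambda>zs. F (ps @ zs)))"
    by (rule torus_continuous_circ_int_n_append) (use assms in simp_all)
  then show ?thesis
    using circ_integrand_integrable_snoc[of r 0 "\<lambda>ps. circ_int_n r n (\<lambda>zs. F (ps @ zs))" "[]"] assms(2)
    by (simp add: torus_def)
qed

lemma circ_int_n_add:
  assumes "torus_continuous r n F" "torus_continuous r n G" "r \<ge> 0"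
  shows "circ_int_n r n (\<lambda>zs. F zs + G zs) = circ_int_n r n F + circ_int_n r n G"
  using assms(1,2)
proof (induction n arbitrary: F G)
  case 0
  then show ?case by simp
next
  case (Suc n)
  have "circ_int_n r (Suc n) (\<lambda>zs. F zs + G zs) =
      circ_int r (\<lambda>z. circ_int_n r n (\<lambda>zs. F (z # zs)) + circ_int_n r n (\<lambda>zs. G (z # zs)))"
    by (simp, rule circ_int_cong[OF assms(3)], rule Suc.IH; rule torus_continuous_Cons)
       (use Suc.prems in auto)
  also have "\<dots> = circ_int_n r (Suc n) F + circ_int_n r (Suc n) G"
    using Suc.prems assms(3) by (simp add: circ_int_add circ_integrand_integrable_Cons)
  finally show ?case .
qed

lemma circ_int_n_cmult: "circ_int_n r n (\<lambda>zs. c * F zs) = c * circ_int_n r n F"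
  by (induction n arbitrary: F) (simp_all add: circ_int_cmult)

lemma circ_int_n_zero: "circ_int_n r n (\<lambda>_. 0) = 0"
  using circ_int_n_cmult[of r n 0 "\<lambda>_. 0"] by simp

lemma circ_int_n_diff:
  assumes "torus_continuous r n F" "torus_continuous r n G" "r \<ge> 0"
  shows "circ_int_n r n (\<lambda>zs. F zs - G zs) = circ_int_n r n F - circ_int_n r n G"
proof -
  have "circ_int_n r n (\<lambda>zs. F zs + (-1) * G zs) = circ_int_n r n F + circ_int_n r n (\<lambda>zs. (-1) * G zs)"
    using assms by (intro circ_int_n_add torus_continuous_intros)
  then show ?thesis
    unfolding circ_int_n_cmult by simp
qed

lemma circ_int_n_sum:
  assumes "\<And>i. i \<in> A \<Longrightarrow> torus_continuous r n (F i)" "r \<ge> 0"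
  shows "circ_int_n r n (\<lambda>zs. \<Sum>i\<in>A. F i zs) = (\<Sum>i\<in>A. circ_int_n r n (F i))"
  using assms(1)
  by (induction A rule: infinite_finite_induct)
     (simp_all add: circ_int_n_zero circ_int_n_add assms(2) torus_continuous_sum)

lemma circ_int_n_norm_le:
  assumes "torus_continuous r n F" "r \<ge> 0" "\<And>zs. zs \<in> torus r n \<Longrightarrow> cmod (F zs) \<le> B"
  shows "cmod (circ_int_n r n F) \<le> r ^ n * B"
  using assms(1,3)
proof (induction n arbitrary: F)
  case 0
  then show ?case by (simp add: torus_def)
next
  case (Suc n)
  have "cmod (circ_int r (\<lambda>z. circ_int_n r n (\<lambda>zs. F (z # zs)))) \<le> r * (r ^ n * B)"
    using Suc assms(2)
    by (intro circ_int_norm_le circ_integrand_integrable_Cons Suc.IH) (auto intro: torus_continuous_Cons)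
  then show ?case by simp
qed

lemma suminf_tail_tendsto_0:
  fixes f :: "nat \<Rightarrow> real"
  assumes "summable f"
  shows "(\<lambda>K. \<Sum>k. f (k + K)) \<longlonglongrightarrow> 0"
proof -
  have "(\<lambda>K. suminf f - (\<Sum>i<K. f i)) \<longlonglongrightarrow> suminf f - suminf f"
    by (intro tendsto_intros summable_LIMSEQ assms)
  then show ?thesis
    by (simp add: suminf_minus_initial_segment[OF assms])
qed

lemma circ_int_n_sums:
  assumes r: "r \<ge> 0" and G: "\<And>k. torus_continuous r N (G k)" and Gs: "torus_continuous r N Gs"
    and sums: "\<And>zs. zs \<in> torus r N \<Longrightarrow> (\<lambda>k. G k zs) sums Gs zs"
    and le: "\<And>k zs. zs \<in> torus r N \<Longrightarrow> cmod (G k zs) \<le> M k" and M: "summable M"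
  shows "(\<lambda>k. circ_int_n r N (G k)) sums circ_int_n r N Gs"
proof -
  have partial: "torus_continuous r N (\<lambda>zs. \<Sum>k<K. G k zs)" for K
    by (intro torus_continuous_sum G)
  have estimate: "norm (circ_int_n r N Gs - (\<Sum>k<K. circ_int_n r N (G k))) \<le> r ^ N * (\<Sum>k. M (k + K))" for K
  proof -
    have "(\<Sum>k<K. circ_int_n r N (G k)) = circ_int_n r N (\<lambda>zs. \<Sum>k<K. G k zs)"
      by (rule circ_int_n_sum[symmetric]) (use G r in auto)
    then have "circ_int_n r N Gs - (\<Sum>k<K. circ_int_n r N (G k)) =
        circ_int_n r N (\<lambda>zs. Gs zs - (\<Sum>k<K. G k zs))"
      by (simp only: circ_int_n_diff[OF Gs partial r])
    also have "cmod \<dots> \<le> r ^ N * (\<Sum>k. M (k + K))"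
    proof (rule circ_int_n_norm_le[OF torus_continuous_diff[OF Gs partial] r])
      fix zs assume zs: "zs \<in> torus r N"
      have "Gs zs - (\<Sum>k<K. G k zs) = (\<Sum>k. G (k + K) zs)"
        using sums_split_initial_segment[OF sums[OF zs]] by (simp add: sums_iff)
      also have "cmod \<dots> \<le> (\<Sum>k. M (k + K))"
        by (rule norm_suminf_le) (use le[OF zs] summable_ignore_initial_segment[OF M] in auto)
      finally show "cmod (Gs zs - (\<Sum>k<K. G k zs)) \<le> (\<Sum>k. M (k + K))" .
    qed
    finally show ?thesis .
  qed
  have "(\<lambda>K. r ^ N * (\<Sum>k. M (k + K))) \<longlonglongrightarrow> 0"
    by (rule tendsto_mult_right_zero[OF suminf_tail_tendsto_0[OF M]])
  then have "(\<lambda>K. circ_int_n r N Gs - (\<Sum>k<K. circ_int_n r N (G k))) \<longlonglongrightarrow> 0"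
    by (rule Lim_null_comparison[rotated]) (simp add: estimate)
  then have "(\<lambda>K. circ_int_n r N Gs - (circ_int_n r N Gs - (\<Sum>k<K. circ_int_n r N (G k))))
      \<longlonglongrightarrow> circ_int_n r N Gs - 0"
    by (intro tendsto_diff tendsto_const)
  then show ?thesis
    by (simp add: sums_def)
qed

lemma continuous_on_torus_pair:
  assumes G: "torus_continuous r 2 G" and "r \<ge> 0"
  shows "continuous_on S (\<lambda>p. G [of_real r * cis (fst p), of_real r * cis (snd p)])"
proof (rule continuous_on_sequentiallyI)
  fix u :: "nat \<Rightarrow> real \<times> real" and a assume "u \<longlonglongrightarrow> a"
  then have "list_tendsto (\<lambda>k. [of_real r * cis (fst (u k)), of_real r * cis (snd (u k))])
      [of_real r * cis (fst a), of_real r * cis (snd a)]"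
    by (intro list_tendsto_Cons list_tendsto_single tendsto_intros)
  then show "(\<lambda>n. G [of_real r * cis (fst (u n)), of_real r * cis (snd (u n))]) \<longlonglongrightarrow>
      G [of_real r * cis (fst a), of_real r * cis (snd a)]"
    using \<open>r \<ge> 0\<close> by (intro torus_continuous_tendsto[OF G]) (auto simp: torus_def norm_mult)
qed

lemma circ_int_swap:
  assumes G: "torus_continuous r 2 G" and "r \<ge> 0"
  shows "circ_int r (\<lambda>a. circ_int r (\<lambda>b. G [a, b])) = circ_int r (\<lambda>b. circ_int r (\<lambda>a. G [a, b]))"
proof -
  define c where "c = 1 / (2 * pi * \<i>)"
  define w where "w t = \<i> * of_real r * cis t" for t
  define g where "g x y = G [of_real r * cis x, of_real r * cis y]" for x y
  define K where "K x y = g x y * w y * w x" for x y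
  have inner_y: "integral {0..2*pi} (K x) = integral {0..2*pi} (\<lambda>y. g x y * w y) * w x" for x
    unfolding K_def by (rule integral_mult_left)
  have inner_x: "integral {0..2*pi} (\<lambda>x. K x y) = integral {0..2*pi} (\<lambda>x. g x y * w x) * w y" for y
    unfolding K_def mult.assoc mult.commute[of "w y"] by (simp only: mult.assoc[symmetric] integral_mult_left)
  have "circ_int r (\<lambda>a. circ_int r (\<lambda>b. G [a, b])) =
      c * integral {0..2*pi} (\<lambda>x. (c * integral {0..2*pi} (\<lambda>y. g x y * w y)) * w x)"
    unfolding circ_int_integral circ_integrand_def c_def w_def g_def ..
  also have "\<dots> = c * (c * integral {0..2*pi} (\<lambda>x. integral {0..2*pi} (K x)))"
    unfolding inner_y mult.assoc integral_mult_right ..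
  also have "integral {0..2*pi} (\<lambda>x. integral {0..2*pi} (K x)) =
      integral {0..2*pi} (\<lambda>y. integral {0..2*pi} (\<lambda>x. K x y))"
  proof -
    have "continuous_on (cbox (0, 0) (2*pi, 2*pi)) (\<lambda>(x, y). K x y)"
      unfolding K_def g_def w_def case_prod_beta'
      by (intro continuous_intros continuous_on_torus_pair[OF assms])
    from integral_swap_continuous[OF this] show ?thesis
      by (simp add: cbox_interval)
  qed
  also have "c * (c * integral {0..2*pi} (\<lambda>y. integral {0..2*pi} (\<lambda>x. K x y))) =
      c * integral {0..2*pi} (\<lambda>y. (c * integral {0..2*pi} (\<lambda>x. g x y * w x)) * w y)"
    unfolding inner_x mult.assoc integral_mult_right ..
  also have "\<dots> = circ_int r (\<lambda>b. circ_int r (\<lambda>a. G [a, b]))"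
    unfolding circ_int_integral circ_integrand_def c_def w_def g_def ..
  finally show ?thesis .
qed

definition swap_adjacent :: "nat \<Rightarrow> 'a list \<Rightarrow> 'a list" where
  "swap_adjacent p zs = permute_list (Transposition.transpose p (Suc p)) zs"

lemma length_swap_adjacent [simp]: "length (swap_adjacent p zs) = length zs"
  by (simp add: swap_adjacent_def)

lemma nth_swap_adjacent:
  "k < length zs \<Longrightarrow> Suc p < length zs \<Longrightarrow> swap_adjacent p zs ! k = zs ! Transposition.transpose p (Suc p) k"
  by (simp add: swap_adjacent_def permute_list_nth permutes_swap_id)

lemma swap_adjacent_0 [simp]: "swap_adjacent 0 (a # b # zs) = b # a # zs"
  by (rule nth_equalityI) (auto simp: nth_swap_adjacent Transposition.transpose_def nth_Cons split: nat.split)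

lemma swap_adjacent_Cons [simp]:
  "Suc p < length zs \<Longrightarrow> swap_adjacent (Suc p) (z # zs) = z # swap_adjacent p zs"
  by (rule nth_equalityI) (auto simp: nth_swap_adjacent Transposition.transpose_def nth_Cons split: nat.split)

lemma swap_adjacent_torus: "zs \<in> torus r n \<Longrightarrow> Suc p < n \<Longrightarrow> swap_adjacent p zs \<in> torus r n"
  by (auto simp: torus_iff_nth nth_swap_adjacent Transposition.transpose_def)

lemma torus_continuous_swap_adjacent:
  assumes "torus_continuous r n F" "Suc p < n"
  shows "torus_continuous r n (\<lambda>zs. F (swap_adjacent p zs))"
proof (rule torus_continuous_compose[OF assms(1)])
  show "swap_adjacent p zs \<in> torus r n" if "zs \<in> torus r n" for zs
    using swap_adjacent_torus[OF that assms(2)] .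
  show "list_tendsto (\<lambda>k. swap_adjacent p (S k)) (swap_adjacent p zs)"
    if "zs \<in> torus r n" "\<And>k. S k \<in> torus r n" "list_tendsto S zs" for zs S
  proof -
    have "Transposition.transpose p (Suc p) i < n" if "i < n" for i
      using that assms(2) by (simp add: Transposition.transpose_def)
    then show ?thesis
      using that assms(2) torus_length[OF that(1)] torus_length[OF that(2)]
      unfolding list_tendsto_def by (simp add: nth_swap_adjacent)
  qed
qed

lemma circ_int_n_swap_first:
  assumes F: "torus_continuous r (Suc (Suc n)) F" and "r \<ge> 0"
  shows "circ_int_n r (Suc (Suc n)) F = circ_int_n r (Suc (Suc n)) (\<lambda>zs. F (swap_adjacent 0 zs))"
proof -
  define G where "G ps = circ_int_n r n (\<lambda>zs. F (ps @ zs))" for ps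
  have "torus_continuous r 2 G"
    unfolding G_def by (rule torus_continuous_circ_int_n_append) (use assms in simp_all)
  from circ_int_swap[OF this \<open>r \<ge> 0\<close>] show ?thesis
    by (simp add: G_def)
qed

lemma circ_int_n_swap_adjacent:
  assumes "torus_continuous r n F" "Suc p < n" "r \<ge> 0"
  shows "circ_int_n r n F = circ_int_n r n (\<lambda>zs. F (swap_adjacent p zs))"
  using assms(1,2)
proof (induction p arbitrary: n F)
  case 0
  then obtain m where "n = Suc (Suc m)"
    by (metis Suc_lessE less_imp_Suc_add)
  then show ?case
    using circ_int_n_swap_first[of r m F] 0 assms(3) by simp
next
  case (Suc p)
  then obtain m where n: "n = Suc m"
    by (metis Suc_lessE)
  have "circ_int_n r (Suc m) F = circ_int r (\<lambda>z. circ_int_n r m (\<lambda>zs. F (z # zs)))"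
    by simp
  also have "\<dots> = circ_int r (\<lambda>z. circ_int_n r m (\<lambda>zs. F (z # swap_adjacent p zs)))"
    by (rule circ_int_cong[OF assms(3)], rule Suc.IH, rule torus_continuous_Cons)
       (use Suc.prems n in auto)
  also have "\<dots> = circ_int_n r (Suc m) (\<lambda>zs. F (swap_adjacent (Suc p) zs))"
    using Suc.prems n by (simp, intro circ_int_cong[OF assms(3)] circ_int_n_cong[OF assms(3)])
      (auto simp: torus_length)
  finally show ?case
    using n by simp
qed

lemma circ_int_n_Cons_last:
  assumes "torus_continuous r (Suc n) F" "r \<ge> 0"
  shows "circ_int_n r (Suc n) F = circ_int_n r n (\<lambda>zs. circ_int r (\<lambda>z. F (z # zs)))"
  using assms(1)
proof (induction n arbitrary: F)
  case 0
  then show ?case by simp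
next
  case (Suc n)
  have "circ_int_n r (Suc (Suc n)) F = circ_int_n r (Suc (Suc n)) (\<lambda>zs. F (swap_adjacent 0 zs))"
    by (rule circ_int_n_swap_first[OF Suc.prems assms(2)])
  also have "\<dots> = circ_int r (\<lambda>b. circ_int_n r (Suc n) (\<lambda>zs. F (swap_adjacent 0 (b # zs))))"
    by (simp only: circ_int_n.simps)
  also have "\<dots> = circ_int r (\<lambda>b. circ_int_n r n (\<lambda>ws. circ_int r (\<lambda>z. F (swap_adjacent 0 (b # z # ws)))))"
  proof (rule circ_int_cong[OF assms(2)])
    fix b :: complex assume "cmod b = r"
    have "torus_continuous r (Suc (Suc n)) (\<lambda>zs. F (swap_adjacent 0 zs))"
      by (rule torus_continuous_swap_adjacent[OF Suc.prems]) simp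
    from torus_continuous_Cons[OF this \<open>cmod b = r\<close>]
    show "circ_int_n r (Suc n) (\<lambda>zs. F (swap_adjacent 0 (b # zs))) =
        circ_int_n r n (\<lambda>ws. circ_int r (\<lambda>z. F (swap_adjacent 0 (b # z # ws))))"
      by (rule Suc.IH)
  qed
  also have "\<dots> = circ_int_n r (Suc n) (\<lambda>zs. circ_int r (\<lambda>z. F (z # zs)))"
    by simp
  finally show ?case .
qed

section \<open>Circle integrals of holomorphic functions\<close>

lemma circ_int_contour_integral: "circ_int r g = contour_integral (circlepath 0 r) g / (2 * pi * \<i>)"
proof -
  have "contour_integral (circlepath 0 r) g =
      integral {0..2*pi} (\<lambda>t. g (0 + of_real r * cis t) * of_real r * \<i> * cis t)"
    unfolding circlepath_def by (rule contour_integral_part_circlepath_eq) simp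
  then show ?thesis
    by (simp add: circ_int_def mult_ac)
qed

lemma circ_int_Cauchy_formula:
  assumes "0 < r" "r < R" "f holomorphic_on ball 0 R" "cmod w < r"
  shows "circ_int r (\<lambda>u. f u / (u - w)) = f w"
proof -
  have "f holomorphic_on cball 0 r"
    by (rule holomorphic_on_subset[OF assms(3)]) (use assms in auto)
  from Cauchy_integral_circlepath_simple[OF this, of w] assms(4)
  have "contour_integral (circlepath 0 r) (\<lambda>u. f u / (u - w)) = 2 * of_real pi * \<i> * f w"
    using contour_integral_unique by simp
  then show ?thesis
    by (simp add: circ_int_contour_integral)
qed

lemma circ_int_holomorphic_eq_0:
  assumes "0 < r" "r < R" "f holomorphic_on ball 0 R"
  shows "circ_int r f = 0"
proof -
  have "(\<lambda>u. u * f u) holomorphic_on ball 0 R"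
    by (intro holomorphic_intros assms(3))
  then have "circ_int r (\<lambda>u. u * f u / (u - 0)) = 0 * f 0"
    using assms by (intro circ_int_Cauchy_formula) auto
  moreover have "circ_int r (\<lambda>u. u * f u / (u - 0)) = circ_int r f"
    by (rule circ_int_cong) (use assms in auto)
  ultimately show ?thesis
    by simp
qed

text \<open>The substitution \<open>z = 1/w\<close> maps the circle of radius \<open>r\<close> onto the circle of radius
  \<open>1/r\<close>; it reverses orientation, and \<open>dz = -dw/w\<^sup>2\<close> restores it.\<close>
lemma circ_int_inversion:
  assumes "r > 0"
  shows "circ_int r g = circ_int (1 / r) (\<lambda>w. g (1 / w) / w ^ 2)"
proof -
  define h where "h = (\<lambda>t. g (of_real r * cis t) * (\<i> * of_real r * cis t))"
  have reflected: "g (1 / (of_real (1 / r) * cis t)) / (of_real (1 / r) * cis t) ^ 2 *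
      (\<i> * of_real (1 / r) * cis t) = h (- t)" for t
  proof -
    have inverse: "1 / (of_real (1 / r) * cis t) = of_real r * cis (- t)"
      using assms by (simp add: field_simps cis_mult)
    have "1 / (of_real (1 / r) * cis t) ^ 2 * (\<i> * of_real (1 / r) * cis t) =
        \<i> * (of_real r * cis (- t))"
      using assms by (simp add: power2_eq_square field_simps cis_mult)
    then have "g (1 / (of_real (1 / r) * cis t)) / (of_real (1 / r) * cis t) ^ 2 *
        (\<i> * of_real (1 / r) * cis t) = g (of_real r * cis (- t)) * (\<i> * (of_real r * cis (- t)))"
      unfolding inverse[symmetric] by (simp only: divide_inverse mult_ac) simp
    then show ?thesis
      unfolding h_def inverse by (simp add: mult_ac)
  qed
  have "integral {0..2*pi} (\<lambda>t. h (- t)) = integral {-(2*pi)..0} h"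
    using Henstock_Kurzweil_Integration.integral_reflect_real[where a="-(2*pi)" and b=0 and f=h] by simp
  also have "\<dots> = integral {0..2*pi} (\<lambda>x. h (x - 2*pi))"
    using integral_shift_real_ivl[where f=h and c="-(2*pi)" and a="-(2*pi)" and b=0] by simp
  also have "\<dots> = integral {0..2*pi} h"
    by (simp add: h_def flip: cis_divide)
  finally show ?thesis
    unfolding circ_int_def reflected by (simp only: h_def)
qed

section \<open>Factorisation of the integrand\<close>

definition pair_factor :: "real \<Rightarrow> complex \<Rightarrow> complex \<Rightarrow> complex" where
  "pair_factor q a b = (a - b) / (a - of_real q * b - (1 - of_real q) * a * b)"

definition pair_prod :: "real \<Rightarrow> nat \<Rightarrow> complex list \<Rightarrow> complex" where
  "pair_prod q N zs = (\<Prod>i<N. \<Prod>j\<in>{i<..<N}. pair_factor q (zs!i) (zs!j))"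

definition leftmost_factor :: "nat \<Rightarrow> complex list \<Rightarrow> complex" where
  "leftmost_factor N zs = (1 - (\<Prod>i<N. zs!i)) / (\<Prod>i<N. (1 - zs!i))"

lemma I_fun_eq: "I_fun q N zs = pair_prod q N zs * leftmost_factor N zs"
  by (simp add: I_fun_def pair_prod_def leftmost_factor_def pair_factor_def)

lemma pair_factor_0_right: "a \<noteq> 0 \<Longrightarrow> pair_factor q a 0 = 1"
  by (simp add: pair_factor_def)

lemma prod_lessThan_Suc_snoc:
  assumes "length ws = M"
  shows "(\<Prod>i<Suc M. f i ((ws @ [z]) ! i)) = (\<Prod>i<M. f i (ws ! i)) * f M z"
proof -
  have "(\<Prod>i<M. f i ((ws @ [z]) ! i)) = (\<Prod>i<M. f i (ws ! i))"
    by (rule prod.cong) (use assms in \<open>auto simp: nth_append\<close>)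
  then show ?thesis
    using assms by (simp add: nth_append)
qed

lemma pair_prod_snoc:
  assumes "length ws = M"
  shows "pair_prod q (Suc M) (ws @ [z]) = pair_prod q M ws * (\<Prod>i<M. pair_factor q (ws!i) z)"
proof -
  have "(\<Prod>j\<in>{i<..<Suc M}. pair_factor q ((ws @ [z]) ! i) ((ws @ [z]) ! j)) =
      (\<Prod>j\<in>{i<..<M}. pair_factor q (ws ! i) (ws ! j)) * pair_factor q (ws ! i) z" if "i < M" for i
  proof -
    have "{i<..<Suc M} = insert M {i<..<M}"
      using that by auto
    moreover have "(\<Prod>j\<in>{i<..<M}. pair_factor q ((ws @ [z]) ! i) ((ws @ [z]) ! j)) =
        (\<Prod>j\<in>{i<..<M}. pair_factor q (ws ! i) (ws ! j))"
      by (rule prod.cong) (use that assms in \<open>auto simp: nth_append\<close>)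
    ultimately show ?thesis
      using that assms by (simp add: nth_append mult.commute)
  qed
  moreover have "{M<..<Suc M} = {}"
    by auto
  ultimately show ?thesis
    by (simp add: pair_prod_def prod.distrib)
qed

lemma pair_prod_Cons:
  "pair_prod q (Suc M) (z # ws) = (\<Prod>j<M. pair_factor q z (ws!j)) * pair_prod q M ws"
proof -
  have shift: "{Suc i<..<Suc M} = Suc ` {i<..<M}" for i
  proof -
    have "{Suc i<..<Suc M} = {Suc (Suc i)..<Suc M}"
      by auto
    also have "\<dots> = Suc ` {Suc i..<M}"
      by simp
    also have "{Suc i..<M} = {i<..<M}"
      by auto
    finally show ?thesis .
  qed
  have "{0<..<Suc M} = {Suc 0..<Suc M}"
    by auto
  also have "\<dots> = Suc ` {..<M}"
    by (simp only: lessThan_atLeast0 image_Suc_atLeastLessThan)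
  finally have "{0<..<Suc M} = Suc ` {..<M}" .
  then show ?thesis
    unfolding pair_prod_def prod.lessThan_Suc_shift shift
    by (simp add: prod.reindex)
qed

lemma leftmost_factor_snoc:
  "length ws = M \<Longrightarrow>
    leftmost_factor (Suc M) (ws @ [z]) = (1 - (\<Prod>i<M. ws!i) * z) / ((\<Prod>i<M. (1 - ws!i)) * (1 - z))"
  unfolding leftmost_factor_def
  using prod_lessThan_Suc_snoc[of ws M "\<lambda>_ w. w" z] prod_lessThan_Suc_snoc[of ws M "\<lambda>_ w. 1 - w" z]
  by simp

lemma leftmost_factor_Cons:
  "leftmost_factor (Suc M) (z # ws) = (1 - z * (\<Prod>i<M. ws!i)) / ((1 - z) * (\<Prod>i<M. (1 - ws!i)))"
  unfolding leftmost_factor_def by (simp only: prod.lessThan_Suc_shift nth_Cons_0 nth_Cons_Suc)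

lemma I_fun_snoc:
  "length ws = M \<Longrightarrow>
    I_fun q (Suc M) (ws @ [z]) = pair_prod q M ws * (\<Prod>i<M. pair_factor q (ws!i) z) *
      ((1 - (\<Prod>i<M. ws!i) * z) / ((\<Prod>i<M. (1 - ws!i)) * (1 - z)))"
  by (simp add: I_fun_eq pair_prod_snoc leftmost_factor_snoc)

lemma I_fun_Cons:
  "I_fun q (Suc M) (z # ws) = (\<Prod>j<M. pair_factor q z (ws!j)) * pair_prod q M ws *
      ((1 - z * (\<Prod>i<M. ws!i)) / ((1 - z) * (\<Prod>i<M. (1 - ws!i))))"
  by (simp add: I_fun_eq pair_prod_Cons leftmost_factor_Cons)

lemma prod_swap_adjacent:
  assumes "length zs = N" "Suc p < N"
  shows "(\<Prod>k<N. f k (swap_adjacent p zs ! k)) = (\<Prod>k<N. f (Transposition.transpose p (Suc p) k) (zs ! k))"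
proof -
  let ?\<tau> = "Transposition.transpose p (Suc p)"
  have perm: "?\<tau> permutes {..<N}"
    using assms(2) by (intro permutes_swap_id) auto
  have "(\<Prod>k<N. f k (swap_adjacent p zs ! k)) = (\<Prod>k<N. f (?\<tau> (?\<tau> k)) (zs ! ?\<tau> k))"
    using assms by (intro prod.cong) (auto simp: nth_swap_adjacent)
  also have "\<dots> = (\<Prod>k<N. f (?\<tau> k) (zs ! k))"
    using prod.permute[OF perm, of "\<lambda>k. f (?\<tau> k) (zs ! k)"] by (simp add: comp_def)
  finally show ?thesis .
qed

lemma sum_swap_adjacent:
  assumes "length zs = N" "Suc p < N"
  shows "(\<Sum>k<N. f (swap_adjacent p zs ! k)) = (\<Sum>k<N. f (zs ! k))"
proof -
  let ?\<tau> = "Transposition.transpose p (Suc p)"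
  have perm: "?\<tau> permutes {..<N}"
    using assms(2) by (intro permutes_swap_id) auto
  have "(\<Sum>k<N. f (swap_adjacent p zs ! k)) = (\<Sum>k<N. f (zs ! ?\<tau> k))"
    using assms by (intro sum.cong) (auto simp: nth_swap_adjacent)
  also have "\<dots> = (\<Sum>k<N. f (zs ! k))"
    using sum.permute[OF perm, of "\<lambda>k. f (zs ! k)"] by (simp add: comp_def)
  finally show ?thesis .
qed

lemma leftmost_factor_swap_adjacent:
  "length zs = N \<Longrightarrow> Suc p < N \<Longrightarrow> leftmost_factor N (swap_adjacent p zs) = leftmost_factor N zs"
  unfolding leftmost_factor_def
  using prod_swap_adjacent[of zs N p "\<lambda>_ z. z"] prod_swap_adjacent[of zs N p "\<lambda>_ z. 1 - z"]
  by simp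

definition index_pairs :: "nat \<Rightarrow> (nat \<times> nat) set" where
  "index_pairs N = Sigma {..<N} (\<lambda>i. {i<..<N})"

definition pair_prod_except :: "real \<Rightarrow> nat \<Rightarrow> nat \<Rightarrow> complex list \<Rightarrow> complex" where
  "pair_prod_except q N p zs =
     (\<Prod>ij\<in>index_pairs N - {(p, Suc p)}. pair_factor q (zs ! fst ij) (zs ! snd ij))"

lemma pair_prod_split_adjacent:
  assumes "Suc p < N"
  shows "pair_prod q N zs = pair_factor q (zs ! p) (zs ! Suc p) * pair_prod_except q N p zs"
proof -
  have "pair_prod q N zs = (\<Prod>ij\<in>index_pairs N. pair_factor q (zs ! fst ij) (zs ! snd ij))"
    unfolding pair_prod_def index_pairs_def by (subst prod.Sigma) (auto simp: case_prod_beta)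
  moreover have "(p, Suc p) \<in> index_pairs N" "finite (index_pairs N)"
    using assms by (simp_all add: index_pairs_def)
  ultimately show ?thesis
    unfolding pair_prod_except_def by (simp add: prod.remove)
qed

lemma transpose_adjacent_index_pairs:
  assumes "(a, b) \<in> index_pairs N - {(p, Suc p)}" and "Suc p < N"
  shows "(Transposition.transpose p (Suc p) a, Transposition.transpose p (Suc p) b) \<in>
    index_pairs N - {(p, Suc p)}"
proof -
  let ?\<tau> = "Transposition.transpose p (Suc p)"
  have ab: "a < b" "b < N" "(a, b) \<noteq> (p, Suc p)"
    using assms(1) by (auto simp: index_pairs_def)
  have "?\<tau> a < ?\<tau> b"
    using ab(1,3) unfolding Transposition.transpose_def by auto
  moreover have "?\<tau> b < N"
    using ab(2) assms(2) unfolding Transposition.transpose_def by auto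
  moreover have "(?\<tau> a, ?\<tau> b) \<noteq> (p, Suc p)"
  proof
    assume "(?\<tau> a, ?\<tau> b) = (p, Suc p)"
    then have "?\<tau> (?\<tau> a) = Suc p" "?\<tau> (?\<tau> b) = p"
      by simp_all
    with ab(1) show False
      by simp
  qed
  ultimately show ?thesis
    by (simp add: index_pairs_def)
qed

text \<open>Swapping two adjacent variables permutes the remaining pairs among themselves.\<close>
lemma pair_prod_except_swap_adjacent:
  assumes "length zs = N" "Suc p < N"
  shows "pair_prod_except q N p (swap_adjacent p zs) = pair_prod_except q N p zs"
proof -
  let ?\<tau> = "Transposition.transpose p (Suc p)"
  let ?\<sigma> = "map_prod ?\<tau> ?\<tau>"
  let ?P = "index_pairs N - {(p, Suc p)}"
  have maps: "?\<sigma> ij \<in> ?P" if "ij \<in> ?P" for ij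
    using transpose_adjacent_index_pairs[of "fst ij" "snd ij" N p] that assms(2)
    by (simp add: map_prod_def case_prod_beta)
  have involution: "?\<sigma> (?\<sigma> ij) = ij" for ij
    by (simp add: prod_eq_iff)
  have "?\<sigma> ` ?P \<subseteq> ?P"
    by (rule image_subsetI) (rule maps)
  then have "bij_betw ?\<sigma> ?P ?P"
    by (intro bij_betw_byWitness[where f' = ?\<sigma>]) (simp_all add: involution)
  from prod.reindex_bij_betw[OF this, of "\<lambda>ij. pair_factor q (zs ! fst ij) (zs ! snd ij)"]
  have "(\<Prod>ij\<in>?P. pair_factor q (zs ! ?\<tau> (fst ij)) (zs ! ?\<tau> (snd ij))) = pair_prod_except q N p zs"
    by (simp add: pair_prod_except_def map_prod_def case_prod_beta)
  moreover have "(\<Prod>ij\<in>?P. pair_factor q (swap_adjacent p zs ! fst ij) (swap_adjacent p zs ! snd ij)) =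
      (\<Prod>ij\<in>?P. pair_factor q (zs ! ?\<tau> (fst ij)) (zs ! ?\<tau> (snd ij)))"
    using assms by (intro prod.cong) (auto simp: index_pairs_def nth_swap_adjacent)
  ultimately show ?thesis
    by (simp add: pair_prod_except_def)
qed

section \<open>Estimates on the circle of radius \<open>r\<close>\<close>

lemma norm_one_minus_of_real: "cmod (1 - complex_of_real q) = \<bar>1 - q\<bar>"
  by (metis norm_of_real of_real_1 of_real_diff)

locale admissible_radius =
  fixes q r :: real
  assumes q_nonzero: "0 < \<bar>q\<bar>" and q_less_1: "\<bar>q\<bar> < 1"
    and r_pos: "0 < r" and r_less: "r < (1 - \<bar>q\<bar>) / \<bar>1 - q\<bar>"
begin

lemma r_nonneg [simp]: "r \<ge> 0"
  using r_pos by simp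

lemma radius_bound: "\<bar>1 - q\<bar> * r < 1 - \<bar>q\<bar>"
  using r_less q_less_1 by (simp add: field_simps)

lemma r_less_1: "r < 1"
proof -
  have "(1 - \<bar>q\<bar>) / \<bar>1 - q\<bar> \<le> 1"
    using q_less_1 by (simp add: field_simps)
  then show ?thesis
    using r_less by linarith
qed

lemma pair_denominator_ge:
  assumes a: "cmod a = r" and b: "cmod b = r"
  shows "cmod (a - of_real q * b - (1 - of_real q) * a * b) \<ge> r * (1 - \<bar>q\<bar> - \<bar>1 - q\<bar> * r)"
proof -
  have "cmod (of_real q * b + (1 - of_real q) * a * b) \<le> \<bar>q\<bar> * r + \<bar>1 - q\<bar> * r * r"
    using norm_triangle_ineq[of "of_real q * b" "(1 - of_real q) * a * b"] a b
    by (simp add: norm_mult norm_one_minus_of_real)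
  moreover have "cmod a - cmod (of_real q * b + (1 - of_real q) * a * b) \<le>
      cmod (a - of_real q * b - (1 - of_real q) * a * b)"
    using norm_triangle_ineq2[of a "of_real q * b + (1 - of_real q) * a * b"] by (simp add: diff_diff_eq)
  ultimately show ?thesis
    using a by (simp add: algebra_simps)
qed

lemma pair_denominator_nonzero:
  assumes "cmod a = r" "cmod b = r"
  shows "a - of_real q * b - (1 - of_real q) * a * b \<noteq> 0"
proof -
  have "0 < r * (1 - \<bar>q\<bar> - \<bar>1 - q\<bar> * r)"
    using radius_bound r_pos by simp
  with pair_denominator_ge[OF assms] show ?thesis
    by auto
qed

lemma prod_one_minus_norm_ge:
  assumes "zs \<in> torus r N"
  shows "cmod (\<Prod>i<N. (1 - zs!i)) \<ge> (1 - r) ^ N"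
proof -
  have "1 - r \<le> cmod (1 - zs!i)" if "i < N" for i
    using norm_triangle_ineq2[of 1 "zs!i"] torus_nth[OF assms that] by simp
  then have "(\<Prod>i<N. (1 - r)) \<le> (\<Prod>i<N. cmod (1 - zs!i))"
    using r_less_1 by (intro prod_mono) auto
  then show ?thesis
    by (simp add: prod_norm)
qed

lemma prod_one_minus_nonzero:
  assumes "zs \<in> torus r N"
  shows "(\<Prod>i<N. (1 - zs!i)) \<noteq> 0"
proof -
  have "0 < (1 - r) ^ N"
    using r_less_1 by simp
  with prod_one_minus_norm_ge[OF assms] have "0 < cmod (\<Prod>i<N. (1 - zs!i))"
    by linarith
  then show ?thesis
    by (metis norm_zero less_irrefl)
qed

lemma torus_continuous_pair_prod: "torus_continuous r N (pair_prod q N)"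
proof -
  have "torus_continuous r N (\<lambda>zs. pair_factor q (zs!i) (zs!j))" if "i < N" "j < N" for i j
    unfolding pair_factor_def
    using radius_bound r_pos that
    by (intro torus_continuous_divide[where d = "r * (1 - \<bar>q\<bar> - \<bar>1 - q\<bar> * r)"] torus_continuous_intros)
       (auto intro!: pair_denominator_ge simp: torus_nth)
  then show ?thesis
    unfolding pair_prod_def by (intro torus_continuous_prod) auto
qed

lemma torus_continuous_leftmost_factor: "torus_continuous r N (leftmost_factor N)"
  unfolding leftmost_factor_def
  using r_less_1 prod_one_minus_norm_ge
  by (intro torus_continuous_divide[where d = "(1 - r) ^ N"] torus_continuous_intros) auto

lemma torus_continuous_I_fun: "torus_continuous r N (I_fun q N)"
  unfolding I_fun_eq
  by (intro torus_continuous_mult torus_continuous_pair_prod torus_continuous_leftmost_factor)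

lemma torus_continuous_eps: "i < N \<Longrightarrow> torus_continuous r N (\<lambda>zs. eps (zs!i))"
  unfolding eps_def
  by (intro torus_continuous_diff torus_continuous_const torus_continuous_divide[where d = r]
        torus_continuous_nth) (auto simp: r_pos torus_nth)

lemma torus_continuous_monomial: "torus_continuous r N (\<lambda>zs. \<Prod>i<N. (zs!i) powi e i)"
  by (intro torus_continuous_prod torus_continuous_powi_nth) (auto simp: r_pos)

text \<open>Radius up to which the integrand is holomorphic in a variable \<open>z\<close> that comes after
  all variables on the circle.\<close>
definition inner_radius :: real where
  "inner_radius = min 1 (r / (\<bar>q\<bar> + \<bar>1 - q\<bar> * r))"

lemma r_less_inner_radius: "r < inner_radius"
proof -
  have "0 < \<bar>q\<bar> + \<bar>1 - q\<bar> * r" "\<bar>q\<bar> + \<bar>1 - q\<bar> * r < 1"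
    using q_nonzero radius_bound r_pos by (auto intro: add_pos_nonneg)
  then have "r < r / (\<bar>q\<bar> + \<bar>1 - q\<bar> * r)"
    using r_pos by (simp add: less_divide_eq)
  then show ?thesis
    using r_less_1 by (simp add: inner_radius_def)
qed

lemma inner_denominator_nonzero:
  assumes w: "cmod w = r" and z: "cmod z < inner_radius"
  shows "w - of_real q * z - (1 - of_real q) * w * z \<noteq> 0"
proof
  assume "w - of_real q * z - (1 - of_real q) * w * z = 0"
  then have "w = z * (of_real q + (1 - of_real q) * w)"
    by (simp add: algebra_simps)
  then have "r = cmod z * cmod (of_real q + (1 - of_real q) * w)"
    using w by (metis norm_mult)
  also have "\<dots> \<le> cmod z * (\<bar>q\<bar> + \<bar>1 - q\<bar> * r)"
    using w norm_triangle_ineq[of "of_real q" "(1 - of_real q) * w"]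
    by (intro mult_left_mono) (auto simp: norm_mult norm_one_minus_of_real)
  also have "\<dots> < r"
  proof -
    have "0 < \<bar>q\<bar> + \<bar>1 - q\<bar> * r"
      using q_nonzero r_pos by (auto intro: add_pos_nonneg)
    moreover have "cmod z < r / (\<bar>q\<bar> + \<bar>1 - q\<bar> * r)"
      using z by (simp add: inner_radius_def)
    ultimately show ?thesis
      by (simp add: less_divide_eq)
  qed
  finally show False
    by simp
qed

lemma holomorphic_pair_factor_inner:
  "cmod w = r \<Longrightarrow> (\<lambda>z. pair_factor q w z) holomorphic_on ball 0 inner_radius"
  unfolding pair_factor_def using inner_denominator_nonzero by (intro holomorphic_intros) auto

lemma one_minus_nonzero_inner: "cmod z < inner_radius \<Longrightarrow> 1 - z \<noteq> 0"
  by (auto simp: inner_radius_def)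

text \<open>Radius up to which the integrand, after the inversion \<open>z = 1/u\<close> of its first variable,
  is holomorphic in \<open>u\<close>.\<close>
definition outer_radius :: real where
  "outer_radius = (1 - \<bar>1 - q\<bar> * r) / (\<bar>q\<bar> * r)"

lemma inverse_r_less_outer_radius: "1 / r < outer_radius"
  using q_nonzero r_pos radius_bound by (simp add: outer_radius_def field_simps)

definition inverted_pair_factor :: "complex \<Rightarrow> complex \<Rightarrow> complex" where
  "inverted_pair_factor u w = (1 - u * w) / (1 - (1 - of_real q) * w - of_real q * w * u)"

lemma outer_denominator_nonzero:
  assumes w: "cmod w = r" and u: "cmod u < outer_radius"
  shows "1 - (1 - of_real q) * w - of_real q * w * u \<noteq> 0"
proof
  assume "1 - (1 - of_real q) * w - of_real q * w * u = 0"
  then have "1 - (1 - of_real q) * w = of_real q * w * u"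
    by (simp add: algebra_simps)
  then have "1 - \<bar>1 - q\<bar> * r \<le> \<bar>q\<bar> * r * cmod u"
    using norm_triangle_ineq2[of 1 "(1 - of_real q) * w"] w
    by (simp add: norm_mult norm_one_minus_of_real mult_ac)
  also have "\<dots> < \<bar>q\<bar> * r * outer_radius"
    using u q_nonzero r_pos by simp
  also have "\<dots> = 1 - \<bar>1 - q\<bar> * r"
    using q_nonzero r_pos by (simp add: outer_radius_def)
  finally show False
    by simp
qed

lemma pair_factor_inverse_left:
  assumes w: "cmod w = r" and u: "cmod u = 1 / r"
  shows "pair_factor q (1 / u) w = inverted_pair_factor u w"
proof -
  have "u \<noteq> 0"
    using u r_pos by auto
  have "1 - (1 - of_real q) * w - of_real q * w * u \<noteq> 0"
    using outer_denominator_nonzero[OF w] u inverse_r_less_outer_radius by simp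
  moreover have "1 / u - w = (1 - u * w) / u"
    using \<open>u \<noteq> 0\<close> by (simp add: field_simps)
  moreover have "1 / u - of_real q * w - (1 - of_real q) * (1 / u) * w =
      (1 - (1 - of_real q) * w - of_real q * w * u) / u"
    using \<open>u \<noteq> 0\<close> by (simp add: field_simps)
  ultimately show ?thesis
    unfolding pair_factor_def inverted_pair_factor_def using \<open>u \<noteq> 0\<close> by simp
qed

lemma inverted_pair_factor_1: "cmod w = r \<Longrightarrow> inverted_pair_factor 1 w = 1"
  using r_less_1 by (auto simp: inverted_pair_factor_def algebra_simps)

end

section \<open>The initial condition\<close>

lemma power_int_inverse_div_square:
  fixes u :: complex
  assumes "e \<le> -2" "u \<noteq> 0"
  shows "(1 / u) powi e / u ^ 2 = u ^ nat (- e - 2)"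
proof -
  have "(1 / u) powi e = u ^ nat (- e)"
    using assms by (simp add: power_int_def)
  moreover have "nat (- e) = nat (- e - 2) + 2"
    using assms by simp
  ultimately show ?thesis
    using assms by (simp add: power_add power2_eq_square)
qed

context admissible_radius
begin

definition eps_sum :: "nat \<Rightarrow> complex list \<Rightarrow> complex" where
  "eps_sum N zs = (\<Sum>i<N. eps (zs!i))"

text \<open>\<open>moment x n ys\<close> is the integral \<open>U\<^sub>n(Y)\<close> of the proof idea above, the coefficient of
  \<open>t\<^sup>n/n!\<close> in the contour integral formula.\<close>
definition moment_integrand :: "int \<Rightarrow> nat \<Rightarrow> int list \<Rightarrow> complex list \<Rightarrow> complex" where
  "moment_integrand x n ys zs =
     I_fun q (length ys) zs * (\<Prod>i<length ys. (zs!i) powi (x - ys!i - 1)) * eps_sum (length ys) zs ^ n"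

definition moment :: "int \<Rightarrow> nat \<Rightarrow> int list \<Rightarrow> complex" where
  "moment x n ys = circ_int_n r (length ys) (moment_integrand x n ys)"

lemma moment_0:
  "moment x 0 ys =
    circ_int_n r (length ys) (\<lambda>zs. I_fun q (length ys) zs * (\<Prod>i<length ys. (zs!i) powi (x - ys!i - 1)))"
  by (simp add: moment_def moment_integrand_def[abs_def])

lemma torus_continuous_eps_sum: "torus_continuous r N (eps_sum N)"
  unfolding eps_sum_def by (intro torus_continuous_sum torus_continuous_eps) auto

lemma torus_continuous_moment_integrand: "torus_continuous r (length ys) (moment_integrand x n ys)"
  unfolding moment_integrand_def
  by (intro torus_continuous_mult torus_continuous_I_fun torus_continuous_monomial
        torus_continuous_power torus_continuous_eps_sum)

lemma circ_int_pair_factors_div: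
  assumes ws: "ws \<in> torus r M" and g: "g holomorphic_on ball 0 inner_radius"
  shows "circ_int r (\<lambda>z. (\<Prod>i<M. pair_factor q (ws!i) z) * g z / z) = g 0"
proof -
  have "circ_int r (\<lambda>z. (\<Prod>i<M. pair_factor q (ws!i) z) * g z / (z - 0)) =
      (\<Prod>i<M. pair_factor q (ws!i) 0) * g 0"
    using ws r_pos
    by (intro circ_int_Cauchy_formula[OF r_pos r_less_inner_radius] holomorphic_intros
          holomorphic_pair_factor_inner g) (auto simp: torus_nth)
  moreover have "(\<Prod>i<M. pair_factor q (ws!i) 0) = 1"
    using torus_nth_nonzero[OF ws] r_pos by (intro prod.neutral) (simp add: pair_factor_0_right)
  ultimately show ?thesis
    by simp
qed

lemma moment_0_eq_0_if_last_less:
  assumes len: "length ys = Suc M" and less: "ys ! M < x"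
  shows "moment x 0 ys = 0"
proof -
  have "moment x 0 ys = circ_int_n r M (\<lambda>ws. circ_int r (\<lambda>z. I_fun q (Suc M) (ws @ [z]) *
      (\<Prod>i<Suc M. ((ws @ [z]) ! i) powi (x - ys!i - 1))))"
    unfolding moment_0 len by (rule circ_int_n_snoc)
  also have "\<dots> = circ_int_n r M (\<lambda>_. 0)"
  proof (rule circ_int_n_cong[OF r_nonneg])
    fix ws assume ws: "ws \<in> torus r M"
    define P where "P = (\<Prod>i<M. ws!i)"
    define D where "D = (\<Prod>i<M. (1 - ws!i))"
    define C where "C = pair_prod q M ws * (\<Prod>i<M. (ws ! i) powi (x - ys!i - 1))"
    have "D \<noteq> 0"
      unfolding D_def by (rule prod_one_minus_nonzero[OF ws])
    then have zero: "circ_int r (\<lambda>z. (\<Prod>i<M. pair_factor q (ws!i) z) * ((1 - P * z) / (D * (1 - z))) *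
        z powi (x - ys ! M - 1)) = 0"
      using ws less one_minus_nonzero_inner
      by (intro circ_int_holomorphic_eq_0[OF r_pos r_less_inner_radius] holomorphic_intros
            holomorphic_pair_factor_inner) (auto simp: torus_nth)
    have factored: "I_fun q (Suc M) (ws @ [z]) * (\<Prod>i<Suc M. ((ws @ [z]) ! i) powi (x - ys!i - 1)) =
        C * ((\<Prod>i<M. pair_factor q (ws!i) z) * ((1 - P * z) / (D * (1 - z))) * z powi (x - ys ! M - 1))"
      for z
      unfolding I_fun_snoc[OF torus_length[OF ws]]
        prod_lessThan_Suc_snoc[OF torus_length[OF ws], where f = "\<lambda>i w. w powi (x - ys!i - 1)"]
      by (simp add: C_def P_def D_def mult_ac)
    show "circ_int r (\<lambda>z. I_fun q (Suc M) (ws @ [z]) *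
        (\<Prod>i<Suc M. ((ws @ [z]) ! i) powi (x - ys!i - 1))) = 0"
      unfolding factored circ_int_cmult zero by simp
  qed
  also have "\<dots> = 0"
    by (rule circ_int_n_zero)
  finally show ?thesis .
qed

text \<open>Iterated residues at \<open>0\<close>: the last variable only sees the pole at \<open>0\<close>, where all its
  pair factors equal \<open>1\<close>.\<close>
lemma circ_int_n_pair_prod_residues:
  "circ_int_n r M (\<lambda>ws. pair_prod q M ws / (\<Prod>i<M. (1 - ws!i)) * (\<Prod>i<M. (ws!i) powi (-1))) = 1"
proof (induction M)
  case 0
  then show ?case
    by (simp add: pair_prod_def)
next
  case (Suc M)
  have "circ_int r (\<lambda>z. pair_prod q (Suc M) (ws @ [z]) / (\<Prod>i<Suc M. (1 - (ws @ [z])!i)) *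
      (\<Prod>i<Suc M. ((ws @ [z])!i) powi (-1))) =
    pair_prod q M ws / (\<Prod>i<M. (1 - ws!i)) * (\<Prod>i<M. (ws!i) powi (-1))"
    (is "circ_int r ?f = ?C") if ws: "ws \<in> torus r M" for ws
  proof -
    note len = torus_length[OF ws]
    have "?f z = (\<Prod>i<M. pair_factor q (ws!i) z) * (?C / (1 - z)) / z" if "z \<noteq> 0" for z
      unfolding pair_prod_snoc[OF len] prod_lessThan_Suc_snoc[OF len, where f = "\<lambda>_ w. 1 - w"]
        prod_lessThan_Suc_snoc[OF len, where f = "\<lambda>_ w. w powi (-1)"]
      using that by (simp add: field_simps)
    then have "circ_int r ?f = circ_int r (\<lambda>z. (\<Prod>i<M. pair_factor q (ws!i) z) * (?C / (1 - z)) / z)"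
      using r_pos by (intro circ_int_cong) auto
    also have "\<dots> = ?C"
      using one_minus_nonzero_inner
      by (subst circ_int_pair_factors_div[OF ws]) (auto intro!: holomorphic_intros)
    finally show ?thesis .
  qed
  then show ?case
    by (simp only: circ_int_n_snoc circ_int_n_cong[OF r_nonneg] Suc.IH)
qed

lemma moment_0_eq_1_if_all_eq:
  assumes len: "length ys = Suc M" and eq: "\<And>i. i < Suc M \<Longrightarrow> ys ! i = x"
  shows "moment x 0 ys = 1"
proof -
  have "moment x 0 ys = circ_int_n r (Suc M) (\<lambda>zs. I_fun q (Suc M) zs * (\<Prod>i<Suc M. (zs!i) powi (-1)))"
    unfolding moment_0 len by (rule circ_int_n_cong[OF r_nonneg]) (use eq in simp)
  also have "\<dots> = circ_int_n r M (\<lambda>ws. circ_int r (\<lambda>z. I_fun q (Suc M) (ws @ [z]) *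
      (\<Prod>i<Suc M. ((ws @ [z]) ! i) powi (-1))))"
    by (rule circ_int_n_snoc)
  also have "\<dots> = circ_int_n r M (\<lambda>ws. pair_prod q M ws / (\<Prod>i<M. (1 - ws!i)) * (\<Prod>i<M. (ws!i) powi (-1)))"
  proof (rule circ_int_n_cong[OF r_nonneg])
    fix ws assume ws: "ws \<in> torus r M"
    note len = torus_length[OF ws]
    define P where "P = (\<Prod>i<M. ws!i)"
    define D where "D = (\<Prod>i<M. (1 - ws!i))"
    define C where "C = (\<Prod>i<M. (ws!i) powi (-1))"
    have "D \<noteq> 0"
      unfolding D_def by (rule prod_one_minus_nonzero[OF ws])
    define g where "g z = pair_prod q M ws * ((1 - P * z) / (D * (1 - z))) * C" for z
    have "I_fun q (Suc M) (ws @ [z]) * (\<Prod>i<Suc M. ((ws @ [z]) ! i) powi (-1)) =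
        (\<Prod>i<M. pair_factor q (ws!i) z) * g z / z" if "z \<noteq> 0" for z
      unfolding I_fun_snoc[OF len] prod_lessThan_Suc_snoc[OF len, where f = "\<lambda>_ w. w powi (-1)"]
      using that by (simp add: g_def P_def D_def C_def field_simps)
    then have "circ_int r (\<lambda>z. I_fun q (Suc M) (ws @ [z]) * (\<Prod>i<Suc M. ((ws @ [z]) ! i) powi (-1))) =
        circ_int r (\<lambda>z. (\<Prod>i<M. pair_factor q (ws!i) z) * g z / z)"
      using r_pos by (intro circ_int_cong) auto
    also have "\<dots> = g 0"
      unfolding g_def using \<open>D \<noteq> 0\<close> one_minus_nonzero_inner
      by (intro circ_int_pair_factors_div[OF ws] holomorphic_intros) auto
    finally show "circ_int r (\<lambda>z. I_fun q (Suc M) (ws @ [z]) * (\<Prod>i<Suc M. ((ws @ [z]) ! i) powi (-1))) =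
        pair_prod q M ws / (\<Prod>i<M. (1 - ws!i)) * (\<Prod>i<M. (ws!i) powi (-1))"
      by (simp add: g_def D_def C_def)
  qed
  also have "\<dots> = 1"
    by (rule circ_int_n_pair_prod_residues)
  finally show ?thesis .
qed

text \<open>After the inversion \<open>z = 1/u\<close> the only singularity inside \<open>|u| = 1/r\<close> is the pole of
  \<open>1/(1 - z)\<close> at \<open>u = 1\<close>; its residue removes the first particle.\<close>
lemma I_fun_Cons_inverse:
  assumes ws: "ws \<in> torus r M" and u: "cmod u = 1 / r"
  shows "I_fun q (Suc M) ((1 / u) # ws) = (\<Prod>j<M. inverted_pair_factor u (ws!j)) * pair_prod q M ws *
    ((u - (\<Prod>i<M. ws!i)) / ((u - 1) * (\<Prod>i<M. (1 - ws!i))))"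
proof -
  have "u \<noteq> 0" "u \<noteq> 1"
    using u r_pos r_less_1 by (auto simp: field_simps)
  have factors: "(\<Prod>j<M. pair_factor q (1 / u) (ws!j)) = (\<Prod>j<M. inverted_pair_factor u (ws!j))"
    using pair_factor_inverse_left torus_nth[OF ws] u by simp
  have "(1 - 1 / u * P) / ((1 - 1 / u) * D) = (u - P) / ((u - 1) * D)" if "D \<noteq> 0" for P D
    using \<open>u \<noteq> 0\<close> \<open>u \<noteq> 1\<close> that by (simp add: field_simps)
  from this[OF prod_one_minus_nonzero[OF ws]] show ?thesis
    unfolding I_fun_Cons factors by simp
qed

lemma circ_int_I_fun_Cons:
  assumes ws: "ws \<in> torus r M" and e: "e \<le> -2"
  shows "circ_int r (\<lambda>z. I_fun q (Suc M) (z # ws) * z powi e) = I_fun q M ws"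
proof -
  define P where "P = (\<Prod>i<M. ws!i)"
  define D where "D = (\<Prod>i<M. (1 - ws!i))"
  have D: "D \<noteq> 0"
    unfolding D_def by (rule prod_one_minus_nonzero[OF ws])
  define \<phi> where "\<phi> u = (\<Prod>j<M. inverted_pair_factor u (ws!j)) * pair_prod q M ws * ((u - P) / D) *
    u ^ nat (- e - 2)" for u
  have inverted: "I_fun q (Suc M) ((1 / u) # ws) * (1 / u) powi e / u ^ 2 = \<phi> u / (u - 1)"
    if u: "cmod u = 1 / r" for u
  proof -
    have "u \<noteq> 0" "u \<noteq> 1"
      using u r_pos r_less_1 by (auto simp: field_simps)
    have "I_fun q (Suc M) ((1 / u) # ws) * (1 / u) powi e / u ^ 2 =
        (\<Prod>j<M. inverted_pair_factor u (ws!j)) * pair_prod q M ws * ((u - P) / ((u - 1) * D)) *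
        ((1 / u) powi e / u ^ 2)"
      unfolding I_fun_Cons_inverse[OF ws u] P_def D_def by simp
    also have "\<dots> = \<phi> u / (u - 1)"
      unfolding power_int_inverse_div_square[OF e \<open>u \<noteq> 0\<close>] \<phi>_def
      using \<open>u \<noteq> 1\<close> D by (simp add: field_simps)
    finally show ?thesis .
  qed
  have "circ_int r (\<lambda>z. I_fun q (Suc M) (z # ws) * z powi e) =
      circ_int (1 / r) (\<lambda>u. I_fun q (Suc M) ((1 / u) # ws) * (1 / u) powi e / u ^ 2)"
    by (rule circ_int_inversion[OF r_pos])
  also have "\<dots> = circ_int (1 / r) (\<lambda>u. \<phi> u / (u - 1))"
    using r_pos by (intro circ_int_cong) (auto simp: inverted)
  also have "\<dots> = \<phi> 1"
  proof (rule circ_int_Cauchy_formula[OF _ inverse_r_less_outer_radius])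
    show "\<phi> holomorphic_on ball 0 outer_radius"
      unfolding \<phi>_def inverted_pair_factor_def
      using outer_denominator_nonzero torus_nth[OF ws] D by (intro holomorphic_intros) auto
  qed (use r_pos r_less_1 in \<open>auto simp: field_simps\<close>)
  also have "\<dots> = I_fun q M ws"
    using inverted_pair_factor_1 torus_nth[OF ws]
    by (simp add: \<phi>_def I_fun_eq leftmost_factor_def P_def D_def)
  finally show ?thesis .
qed

lemma moment_0_Cons_greater:
  assumes "x < y"
  shows "moment x 0 (y # ys) = moment x 0 ys"
proof -
  define M where "M = length ys"
  have "moment x 0 (y # ys) = circ_int_n r (Suc M) (\<lambda>zs. I_fun q (Suc M) zs *
      (\<Prod>i<Suc M. (zs!i) powi (x - (y # ys)!i - 1)))"
    by (simp add: moment_0 M_def)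
  also have "\<dots> = circ_int_n r M (\<lambda>ws. circ_int r (\<lambda>z. I_fun q (Suc M) (z # ws) *
      (\<Prod>i<Suc M. ((z # ws)!i) powi (x - (y # ys)!i - 1))))"
    by (intro circ_int_n_Cons_last torus_continuous_mult torus_continuous_I_fun
        torus_continuous_monomial r_nonneg)
  also have "\<dots> = circ_int_n r M (\<lambda>ws. I_fun q M ws * (\<Prod>i<M. (ws!i) powi (x - ys!i - 1)))"
  proof (rule circ_int_n_cong[OF r_nonneg])
    fix ws assume ws: "ws \<in> torus r M"
    define C where "C = (\<Prod>i<M. (ws!i) powi (x - ys!i - 1))"
    have exponent: "x - y - 1 \<le> -2"
      using assms by simp
    have factored: "I_fun q (Suc M) (z # ws) * (\<Prod>i<Suc M. ((z # ws)!i) powi (x - (y # ys)!i - 1)) =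
        C * (I_fun q (Suc M) (z # ws) * z powi (x - y - 1))" for z
      unfolding prod.lessThan_Suc_shift C_def by (simp add: mult_ac)
    show "circ_int r (\<lambda>z. I_fun q (Suc M) (z # ws) *
        (\<Prod>i<Suc M. ((z # ws)!i) powi (x - (y # ys)!i - 1))) = I_fun q M ws * C"
      unfolding factored circ_int_cmult circ_int_I_fun_Cons[OF ws exponent] by (rule mult.commute)
  qed
  finally show ?thesis
    by (simp add: moment_0 M_def)
qed

lemma moment_0_Nil: "moment x 0 [] = 0"
  by (simp add: moment_0 I_fun_def)

lemma moment_0_sorted:
  assumes "sorted_wrt (\<ge>) ys"
  shows "moment x 0 ys = (if ys \<noteq> [] \<and> last ys = x then 1 else 0)"
  using assms
proof (induction ys)
  case Nil
  then show ?case
    by (simp add: moment_0_Nil)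
next
  case (Cons y ys)
  define M where "M = length ys"
  have last: "last (y # ys) = (y # ys) ! M"
    by (simp add: M_def last_conv_nth)
  have sorted: "(y # ys) ! j \<le> (y # ys) ! i" if "i \<le> j" "j \<le> M" for i j
    using Cons.prems that unfolding sorted_wrt_iff_nth_less M_def
    by (cases "i = j") (auto simp: less_Suc_eq_le)
  consider "x < y" | "(y # ys) ! M < x" | "\<not> x < y" "\<not> (y # ys) ! M < x"
    by blast
  then show ?case
  proof cases
    case 1
    then show ?thesis
      using Cons by (auto simp: moment_0_Cons_greater)
  next
    case 2
    then show ?thesis
      using moment_0_eq_0_if_last_less[of "y # ys" M x] last by (simp add: M_def)
  next
    case 3
    have "(y # ys) ! i = x" if "i < Suc M" for i
      using sorted[of i M] sorted[of 0 i] that 3 by simp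
    then show ?thesis
      using moment_0_eq_1_if_all_eq[of "y # ys" M x] last by (simp add: M_def)
  qed
qed

end

section \<open>The contour integrals solve the backward equation\<close>

context admissible_radius
begin

lemma pair_factor_eps:
  assumes a: "cmod a = r" and b: "cmod b = r"
  shows "pair_factor q a b * (eps b - of_real q * eps a) = eps b - eps a"
proof -
  define D where "D = a - of_real q * b - (1 - of_real q) * a * b"
  have "a \<noteq> 0" "b \<noteq> 0"
    using a b r_pos by auto
  moreover have "D \<noteq> 0"
    unfolding D_def by (rule pair_denominator_nonzero[OF a b])
  moreover have "eps b - of_real q * eps a = D / (a * b)"
    using \<open>a \<noteq> 0\<close> \<open>b \<noteq> 0\<close> by (simp add: eps_def D_def field_simps)
  ultimately show ?thesis
    by (simp add: pair_factor_def D_def[symmetric] eps_def field_simps)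
qed

definition eps_moment :: "int \<Rightarrow> nat \<Rightarrow> int list \<Rightarrow> nat \<Rightarrow> complex" where
  "eps_moment x n ys i = circ_int_n r (length ys) (\<lambda>zs. moment_integrand x n ys zs * eps (zs ! i))"

lemma moment_Suc: "moment x (Suc n) ys = (\<Sum>i<length ys. eps_moment x n ys i)"
proof -
  have "moment_integrand x (Suc n) ys zs = moment_integrand x n ys zs * eps_sum (length ys) zs" for zs
    by (simp add: moment_integrand_def mult_ac)
  then have "moment x (Suc n) ys =
      circ_int_n r (length ys) (\<lambda>zs. \<Sum>i<length ys. moment_integrand x n ys zs * eps (zs ! i))"
    unfolding moment_def by (intro circ_int_n_cong[OF r_nonneg]) (simp add: eps_sum_def sum_distrib_left)
  also have "\<dots> = (\<Sum>i<length ys. eps_moment x n ys i)"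
    unfolding eps_moment_def
    by (intro circ_int_n_sum torus_continuous_mult torus_continuous_moment_integrand
          torus_continuous_eps) auto
  finally show ?thesis .
qed

text \<open>\<open>eps z * z\<^bsup>x-y-1\<^esup> = z\<^bsup>x-(y+1)-1\<^esup> - z\<^bsup>x-y-1\<^esup>\<close>.\<close>
lemma eps_moment_eq_shift:
  assumes i: "i < length ys"
  shows "eps_moment x n ys i = moment x n (ys[i := ys ! i + 1]) - moment x n ys"
proof -
  define N where "N = length ys"
  let ?ys' = "ys[i := ys ! i + 1]"
  have "moment_integrand x n ys zs * eps (zs ! i) = moment_integrand x n ?ys' zs - moment_integrand x n ys zs"
    if zs: "zs \<in> torus r N" for zs
  proof -
    have "zs ! i \<noteq> 0"
      using torus_nth_nonzero[OF zs] i r_pos by (simp add: N_def)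
    define C where "C = (\<Prod>k\<in>{..<N} - {i}. (zs!k) powi (x - ys!k - 1))"
    have old: "(\<Prod>k<N. (zs!k) powi (x - ys!k - 1)) = (zs!i) powi (x - ys!i - 1) * C"
      unfolding C_def using i by (subst prod.remove[of _ i]) (auto simp: N_def)
    have new: "(\<Prod>k<N. (zs!k) powi (x - ?ys'!k - 1)) = (zs!i) powi (x - ys!i - 1) / zs!i * C"
    proof -
      have "(\<Prod>k\<in>{..<N} - {i}. (zs!k) powi (x - ?ys'!k - 1)) = C"
        unfolding C_def by (rule prod.cong) auto
      moreover have "(zs!i) powi (x - (ys!i + 1) - 1) = (zs!i) powi (x - ys!i - 1) / zs!i"
        using \<open>zs ! i \<noteq> 0\<close> by (simp add: power_int_diff power2_eq_square)
      ultimately show ?thesis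
        using i by (subst prod.remove[of _ i]) (auto simp: N_def)
    qed
    show ?thesis
      unfolding moment_integrand_def length_list_update N_def[symmetric] old new
      using \<open>zs ! i \<noteq> 0\<close> by (simp add: eps_def field_simps)
  qed
  then have "eps_moment x n ys i =
      circ_int_n r N (\<lambda>zs. moment_integrand x n ?ys' zs - moment_integrand x n ys zs)"
    unfolding eps_moment_def N_def[symmetric] by (intro circ_int_n_cong) auto
  also have "\<dots> = moment x n ?ys' - moment x n ys"
    using circ_int_n_diff[OF _ torus_continuous_moment_integrand r_nonneg]
      torus_continuous_moment_integrand[of ?ys' x n]
    by (simp add: moment_def N_def)
  finally show ?thesis .
qed

lemma moment_integrand_split_adjacent:
  assumes "Suc i < length ys" "length zs = length ys"
  shows "moment_integrand x n ys zs = pair_factor q (zs ! i) (zs ! Suc i) *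
    (pair_prod_except q (length ys) i zs * leftmost_factor (length ys) zs *
     (\<Prod>k<length ys. (zs!k) powi (x - ys!k - 1)) * eps_sum (length ys) zs ^ n)"
  using assms by (simp add: moment_integrand_def I_fun_eq pair_prod_split_adjacent mult_ac)

lemma moment_integrand_swap_adjacent_eps:
  assumes i: "Suc i < length ys" and eq: "ys ! i = ys ! Suc i" and zs: "zs \<in> torus r (length ys)"
  shows "moment_integrand x n ys (swap_adjacent i zs) *
      (eps (swap_adjacent i zs ! Suc i) - of_real q * eps (swap_adjacent i zs ! i)) =
    - (moment_integrand x n ys zs * (eps (zs ! Suc i) - of_real q * eps (zs ! i)))"
proof -
  define N where "N = length ys"
  have len: "length zs = N" and iN: "Suc i < N"
    using torus_length[OF zs] i by (simp_all add: N_def)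
  let ?\<tau> = "Transposition.transpose i (Suc i)"
  define Q where "Q = pair_prod_except q N i zs * leftmost_factor N zs *
    (\<Prod>k<N. (zs!k) powi (x - ys!k - 1)) * eps_sum N zs ^ n"
  have swapped: "swap_adjacent i zs ! i = zs ! Suc i" "swap_adjacent i zs ! Suc i = zs ! i"
    using iN len by (simp_all add: nth_swap_adjacent)
  have "(\<Prod>k<N. (swap_adjacent i zs ! k) powi (x - ys!k - 1)) =
      (\<Prod>k<N. (zs ! k) powi (x - ys ! ?\<tau> k - 1))"
    by (rule prod_swap_adjacent[OF len iN])
  also have "\<dots> = (\<Prod>k<N. (zs!k) powi (x - ys!k - 1))"
    using eq by (intro prod.cong) (auto simp: Transposition.transpose_def)
  finally have swap: "moment_integrand x n ys (swap_adjacent i zs) = Q * pair_factor q (zs ! Suc i) (zs ! i)"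
    using len iN
    by (simp add: moment_integrand_split_adjacent swapped pair_prod_except_swap_adjacent
        leftmost_factor_swap_adjacent eps_sum_def sum_swap_adjacent Q_def N_def)
  have unswapped: "moment_integrand x n ys zs = Q * pair_factor q (zs ! i) (zs ! Suc i)"
    using len iN by (simp add: moment_integrand_split_adjacent Q_def N_def)
  have a: "cmod (zs ! i) = r" and b: "cmod (zs ! Suc i) = r"
    using torus_nth[OF zs] i by auto
  show ?thesis
    unfolding swapped swap unswapped mult.assoc pair_factor_eps[OF a b] pair_factor_eps[OF b a]
    by (simp add: algebra_simps)
qed

text \<open>For two particles at the same site, \<open>eps z' - q eps z\<close> turns the pair factor of \<open>z, z'\<close>
  into \<open>eps z' - eps z\<close>, and the rest of the integrand is symmetric under \<open>z \<leftrightarrow> z'\<close>.\<close>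
lemma eps_moment_Suc_eq:
  assumes i: "Suc i < length ys" and eq: "ys ! i = ys ! Suc i"
  shows "eps_moment x n ys (Suc i) = of_real q * eps_moment x n ys i"
proof -
  define N where "N = length ys"
  have iN: "Suc i < N"
    using i by (simp add: N_def)
  define H where "H zs = moment_integrand x n ys zs * (eps (zs ! Suc i) - of_real q * eps (zs ! i))" for zs
  have H_cont: "torus_continuous r N H"
    unfolding H_def N_def using i
    by (intro torus_continuous_intros torus_continuous_moment_integrand torus_continuous_eps) auto
  have "circ_int_n r N H = circ_int_n r N (\<lambda>zs. H (swap_adjacent i zs))"
    by (rule circ_int_n_swap_adjacent[OF H_cont iN r_nonneg])
  also have "\<dots> = circ_int_n r N (\<lambda>zs. (-1) * H zs)"
    unfolding H_def N_def using moment_integrand_swap_adjacent_eps[OF i eq]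
    by (intro circ_int_n_cong) simp_all
  finally have "circ_int_n r N H = - circ_int_n r N H"
    unfolding circ_int_n_cmult by simp
  then have "circ_int_n r N H = 0"
    by simp
  moreover have "circ_int_n r N H = eps_moment x n ys (Suc i) - of_real q * eps_moment x n ys i"
  proof -
    have "circ_int_n r N H = circ_int_n r N (\<lambda>zs. moment_integrand x n ys zs * eps (zs ! Suc i) -
        of_real q * (moment_integrand x n ys zs * eps (zs ! i)))"
      unfolding H_def by (intro circ_int_n_cong) (simp_all add: algebra_simps)
    also have "\<dots> = circ_int_n r N (\<lambda>zs. moment_integrand x n ys zs * eps (zs ! Suc i)) -
        circ_int_n r N (\<lambda>zs. of_real q * (moment_integrand x n ys zs * eps (zs ! i)))"
      using i unfolding N_def
      by (intro circ_int_n_diff torus_continuous_mult torus_continuous_const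
          torus_continuous_moment_integrand torus_continuous_eps r_nonneg) auto
    finally show ?thesis
      by (simp add: circ_int_n_cmult eps_moment_def N_def)
  qed
  ultimately show ?thesis
    by simp
qed

lemma eps_moment_block:
  assumes "j + c \<le> length ys" and block: "\<And>k. j \<le> k \<Longrightarrow> k < j + c \<Longrightarrow> ys ! k = ys ! j"
  shows "(\<Sum>k\<in>{j..<j + c}. eps_moment x n ys k) = of_real (qint q c) * eps_moment x n ys j"
proof -
  have "eps_moment x n ys (j + d) = of_real q ^ d * eps_moment x n ys j" if "d < c" for d
    using that
  proof (induction d)
    case 0
    then show ?case by simp
  next
    case (Suc d)
    then have "ys ! (j + d) = ys ! Suc (j + d)"
      using block[of "j + d"] block[of "Suc (j + d)"] by simp
    then show ?case
      using Suc assms(1) by (simp add: eps_moment_Suc_eq)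
  qed
  then have "(\<Sum>k\<in>{j..<j + c}. eps_moment x n ys k) = (\<Sum>d<c. of_real q ^ d * eps_moment x n ys j)"
    using sum.shift_bounds_nat_ivl[of "eps_moment x n ys" 0 j c] by (simp add: add.commute atLeast0LessThan)
  also have "\<dots> = of_real (qint q c) * eps_moment x n ys j"
    by (simp add: qint_def sum_distrib_right)
  finally show ?thesis .
qed

end

section \<open>Configurations as sorted lists\<close>

definition first_index :: "'a list \<Rightarrow> 'a \<Rightarrow> nat" where
  "first_index ys s = (LEAST j. j < length ys \<and> ys ! j = s)"

lemma first_index:
  assumes "s \<in> set ys"
  shows "first_index ys s < length ys" "ys ! first_index ys s = s"
    and "\<And>k. k < first_index ys s \<Longrightarrow> ys ! k \<noteq> s"
proof -
  obtain i where "i < length ys" "ys ! i = s"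
    using assms by (simp add: in_set_conv_nth) blast
  then have "first_index ys s < length ys \<and> ys ! first_index ys s = s"
    unfolding first_index_def by (rule LeastI[of _ i, OF conjI])
  then show "first_index ys s < length ys" "ys ! first_index ys s = s"
    by auto
  show "ys ! k \<noteq> s" if "k < first_index ys s" for k
    using not_less_Least[OF that[unfolded first_index_def]] that \<open>first_index ys s < length ys\<close>
    by (auto simp: first_index_def)
qed

lemma sorted_desc_nth_mono:
  fixes ys :: "'a::linorder list"
  assumes "sorted_wrt (\<ge>) ys" "i \<le> j" "j < length ys"
  shows "ys ! j \<le> ys ! i"
  using assms by (cases "i = j") (auto simp: sorted_wrt_iff_nth_less)

lemma sorted_desc_indices_eq:
  fixes ys :: "'a::linorder list"
  assumes sorted: "sorted_wrt (\<ge>) ys" and s: "s \<in> set ys"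
  shows "{i. i < length ys \<and> ys ! i = s} = {first_index ys s..<first_index ys s + count (mset ys) s}"
proof -
  define S where "S = {i. i < length ys \<and> ys ! i = s}"
  define j where "j = first_index ys s"
  define m where "m = Max S"
  have "finite S"
    by (simp add: S_def)
  have "j \<in> S"
    using first_index[OF s] by (simp add: S_def j_def)
  have "m \<in> S"
    unfolding m_def by (rule Max_in[OF \<open>finite S\<close>]) (use \<open>j \<in> S\<close> in blast)
  have "S = {j..m}"
  proof (intro equalityI subsetI)
    fix k assume k: "k \<in> S"
    then have "\<not> k < j"
      using first_index(3)[OF s, of k] by (auto simp: S_def j_def)
    moreover have "k \<le> m"
      unfolding m_def using \<open>finite S\<close> k by (rule Max_ge)
    ultimately show "k \<in> {j..m}"
      by simp
  next
    fix k assume k: "k \<in> {j..m}"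
    have "m < length ys" "ys ! m = s" "ys ! j = s"
      using \<open>m \<in> S\<close> \<open>j \<in> S\<close> by (simp_all add: S_def)
    moreover have "ys ! k \<le> ys ! j" "ys ! m \<le> ys ! k"
      using k \<open>m < length ys\<close> by (auto intro!: sorted_desc_nth_mono[OF sorted])
    ultimately show "k \<in> S"
      using k by (simp add: S_def)
  qed
  moreover have "count (mset ys) s = card S"
    by (simp add: S_def count_mset count_list_eq_length_filter length_filter_conv_card eq_commute)
  ultimately show ?thesis
    using \<open>j \<in> S\<close> by (simp add: S_def j_def atLeastLessThanSuc_atLeastAtMost)
qed

lemma sorted_desc_update_first_index:
  fixes ys :: "int list"
  assumes sorted: "sorted_wrt (\<ge>) ys" and s: "s \<in> set ys"
  shows "sorted_wrt (\<ge>) (ys[first_index ys s := s + 1])"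
  unfolding sorted_wrt_iff_nth_less
proof (intro allI impI)
  fix a b assume ab: "a < b" "b < length (ys[first_index ys s := s + 1])"
  note j = first_index[OF s]
  have "ys ! b \<le> ys ! a"
    using sorted_desc_nth_mono[OF sorted, of a b] ab by simp
  moreover have "ys ! b \<le> s" if "a = first_index ys s"
    using sorted_desc_nth_mono[OF sorted, of a b] ab that j by simp
  moreover have "s + 1 \<le> ys ! a" if "b = first_index ys s"
    using \<open>ys ! b \<le> ys ! a\<close> j(2) j(3)[of a] ab that by force
  moreover have "a < length ys" "b < length ys"
    using ab by simp_all
  ultimately show "ys[first_index ys s := s + 1] ! b \<le> ys[first_index ys s := s + 1] ! a"
    using \<open>a < b\<close> by (cases "a = first_index ys s"; cases "b = first_index ys s") simp_all
qed

definition desc_list :: "'a::linorder multiset \<Rightarrow> 'a list" where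
  "desc_list X = rev (sorted_list_of_multiset X)"

lemma sorted_desc_list: "sorted_wrt (\<ge>) (desc_list X)"
  by (simp add: desc_list_def sorted_wrt_rev)

lemma mset_desc_list [simp]: "mset (desc_list X) = X"
  by (simp add: desc_list_def)

lemma desc_list_mset:
  assumes "sorted_wrt (\<ge>) ys"
  shows "desc_list (mset ys) = ys"
proof -
  have "sort ys = rev ys"
    by (rule properties_for_sort) (use assms in \<open>simp_all add: sorted_wrt_rev\<close>)
  then show ?thesis
    by (simp add: desc_list_def)
qed

lemma last_sorted_desc:
  fixes ys :: "'a::linorder list"
  assumes "sorted_wrt (\<ge>) ys" "ys \<noteq> []"
  shows "last ys = Min (set ys)"
proof (rule Min_eqI[symmetric])
  fix y assume "y \<in> set ys"
  then show "last ys \<le> y"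
    using sorted_desc_nth_mono[OF assms(1)] assms(2)
    by (auto simp: in_set_conv_nth last_conv_nth)
qed (use assms in auto)

context admissible_radius
begin

lemma moment_Suc_sorted:
  assumes sorted: "sorted_wrt (\<ge>) ys"
  shows "moment x (Suc n) ys = (\<Sum>s\<in>set ys. of_real (qint q (count (mset ys) s)) *
      (moment x n (ys[first_index ys s := s + 1]) - moment x n ys))"
proof -
  have "moment x (Suc n) ys = (\<Sum>s\<in>set ys. \<Sum>i\<in>{i. i \<in> {..<length ys} \<and> ys ! i = s}. eps_moment x n ys i)"
    unfolding moment_Suc by (rule sum.group[symmetric]) (auto simp: image_subset_iff)
  also have "\<dots> = (\<Sum>s\<in>set ys. of_real (qint q (count (mset ys) s)) * eps_moment x n ys (first_index ys s))"
  proof (rule sum.cong[OF refl])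
    fix s assume s: "s \<in> set ys"
    define j c where "j = first_index ys s" and "c = count (mset ys) s"
    have block: "{i. i < length ys \<and> ys ! i = s} = {j..<j + c}"
      unfolding j_def c_def by (rule sorted_desc_indices_eq[OF sorted s])
    have "0 < c"
      using s by (simp add: c_def)
    then have "j + c - 1 \<in> {i. i < length ys \<and> ys ! i = s}"
      unfolding block by simp
    then have "j + c \<le> length ys"
      using \<open>0 < c\<close> by auto
    moreover have "ys ! k = ys ! j" if "j \<le> k" "k < j + c" for k
    proof -
      have "k \<in> {i. i < length ys \<and> ys ! i = s}" "j \<in> {i. i < length ys \<and> ys ! i = s}"
        unfolding block using that by simp_all
      then show ?thesis
        by simp
    qed
    ultimately show "(\<Sum>i\<in>{i. i \<in> {..<length ys} \<and> ys ! i = s}. eps_moment x n ys i) =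
        of_real (qint q (count (mset ys) s)) * eps_moment x n ys (first_index ys s)"
      using eps_moment_block[of j c ys x n] by (simp add: block j_def c_def)
  qed
  also have "\<dots> = (\<Sum>s\<in>set ys. of_real (qint q (count (mset ys) s)) *
      (moment x n (ys[first_index ys s := s + 1]) - moment x n ys))"
    by (intro sum.cong refl) (simp add: eps_moment_eq_shift first_index)
  finally show ?thesis .
qed

definition moment_mset :: "int \<Rightarrow> nat \<Rightarrow> int multiset \<Rightarrow> complex" where
  "moment_mset x n X = moment x n (desc_list X)"

lemma moment_mset_Suc:
  "moment_mset x (Suc n) X = (\<Sum>s\<in>set_mset X. of_real (qint q (count X s)) *
      (moment_mset x n (add_mset (s + 1) (X - {#s#})) - moment_mset x n X))"
proof -
  define ys where "ys = desc_list X"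
  have sorted: "sorted_wrt (\<ge>) ys" and X: "X = mset ys"
    by (simp_all add: ys_def sorted_desc_list)
  have "moment_mset x n (add_mset (s + 1) (X - {#s#})) = moment x n (ys[first_index ys s := s + 1])"
    if "s \<in> set ys" for s
  proof -
    have "add_mset (s + 1) (X - {#s#}) = mset (ys[first_index ys s := s + 1])"
      using mset_update[OF first_index(1)[OF that]] first_index(2)[OF that] by (simp add: X)
    then show ?thesis
      using desc_list_mset[OF sorted_desc_update_first_index[OF sorted that]] by (simp add: moment_mset_def)
  qed
  then show ?thesis
    unfolding moment_mset_def ys_def[symmetric] moment_Suc_sorted[OF sorted]
    by (simp add: X)
qed

lemma moment_mset_0:
  assumes "X \<noteq> {#}"
  shows "moment_mset x 0 X = (if Min (set_mset X) = x then 1 else 0)"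
proof -
  have "desc_list X \<noteq> []"
    using assms mset_desc_list[of X] by (metis mset.simps(1))
  have "set (desc_list X) = set_mset X"
    by (metis mset_desc_list set_mset_mset)
  then have "last (desc_list X) = Min (set_mset X)"
    using last_sorted_desc[OF sorted_desc_list \<open>desc_list X \<noteq> []\<close>] by simp
  then show ?thesis
    using moment_0_sorted[OF sorted_desc_list, of x X] \<open>desc_list X \<noteq> []\<close>
    by (simp add: moment_mset_def)
qed

lemma tazrp_gen_power_eq_moment_mset:
  assumes "X \<noteq> {#}"
  shows "of_real ((tazrp_gen q ^^ n) (\<lambda>X. if Min (set_mset X) = x then 1 else 0) X) = moment_mset x n X"
  using assms
proof (induction n arbitrary: X)
  case 0
  then show ?case
    by (simp add: moment_mset_0)
next
  case (Suc n)
  then show ?case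
    by (simp add: tazrp_gen_def moment_mset_Suc of_real_sum)
qed

end

section \<open>Summation of the exponential series\<close>

context admissible_radius
begin

lemma moment_integrand_sums:
  assumes "length ys = N"
  shows "(\<lambda>n. of_real (t ^ n / fact n) * moment_integrand x n ys zs) sums
     (I_fun q N zs * (\<Prod>i<N. (zs!i) powi (x - ys!i - 1) * exp (eps (zs!i) * of_real t)))"
proof -
  define A where "A = I_fun q N zs * (\<Prod>i<N. (zs!i) powi (x - ys!i - 1))"
  have "(\<lambda>n. A * ((of_real t * eps_sum N zs) ^ n /\<^sub>R fact n)) sums (A * exp (of_real t * eps_sum N zs))"
    by (intro sums_mult exp_converges)
  moreover have "A * ((of_real t * eps_sum N zs) ^ n /\<^sub>R fact n) = of_real (t ^ n / fact n) * moment_integrand x n ys zs"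
    for n
    using assms
    by (simp add: A_def moment_integrand_def scaleR_conv_of_real power_mult_distrib divide_inverse mult_ac)
  moreover have "A * exp (of_real t * eps_sum N zs) =
      I_fun q N zs * (\<Prod>i<N. (zs!i) powi (x - ys!i - 1) * exp (eps (zs!i) * of_real t))"
    by (simp add: A_def eps_sum_def sum_distrib_left exp_sum prod.distrib mult_ac)
  ultimately show ?thesis
    by simp
qed

lemma moment_integrand_majorant:
  assumes "t \<ge> 0"
  obtains M where "summable M"
    and "\<And>n zs. zs \<in> torus r (length ys) \<Longrightarrow> cmod (of_real (t ^ n / fact n) * moment_integrand x n ys zs) \<le> M n"
proof -
  define N where "N = length ys"
  obtain A where A: "\<And>zs. zs \<in> torus r N \<Longrightarrow> cmod (I_fun q N zs * (\<Prod>i<N. (zs!i) powi (x - ys!i - 1))) \<le> A"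
    using torus_continuous_bounded[OF torus_continuous_mult[OF torus_continuous_I_fun
        torus_continuous_monomial[of N "\<lambda>i. x - ys!i - 1"]]] by blast
  obtain E where E: "\<And>zs. zs \<in> torus r N \<Longrightarrow> cmod (eps_sum N zs) \<le> E"
    using torus_continuous_bounded[OF torus_continuous_eps_sum] by blast
  show ?thesis
  proof
    show "summable (\<lambda>n. A * ((t * E) ^ n /\<^sub>R fact n))"
      by (intro summable_mult summable_exp_generic)
    fix n zs assume "zs \<in> torus r (length ys)"
    then have A_zs: "cmod (I_fun q N zs * (\<Prod>i<N. (zs!i) powi (x - ys!i - 1))) \<le> A"
      and E_zs: "cmod (eps_sum N zs) \<le> E"
      using A E by (simp_all add: N_def)
    have "cmod (of_real (t ^ n / fact n) * moment_integrand x n ys zs) =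
        t ^ n / fact n * (cmod (I_fun q N zs * (\<Prod>i<N. (zs!i) powi (x - ys!i - 1))) * cmod (eps_sum N zs) ^ n)"
      using assms by (simp add: moment_integrand_def N_def norm_mult norm_power norm_divide)
    also have "\<dots> \<le> t ^ n / fact n * (A * E ^ n)"
      using assms A_zs E_zs order_trans[OF norm_ge_zero A_zs] order_trans[OF norm_ge_zero E_zs]
      by (intro mult_left_mono mult_mono power_mono) auto
    also have "\<dots> = A * ((t * E) ^ n /\<^sub>R fact n)"
      by (simp add: power_mult_distrib divide_inverse mult_ac)
    finally show "cmod (of_real (t ^ n / fact n) * moment_integrand x n ys zs) \<le> A * ((t * E) ^ n /\<^sub>R fact n)" .
  qed
qed

lemma sums_moment:
  assumes "t \<ge> 0"
  shows "(\<lambda>n. of_real (t ^ n / fact n) * moment x n ys) sums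
    circ_int_n r (length ys) (\<lambda>zs. I_fun q (length ys) zs *
       (\<Prod>i<length ys. (zs!i) powi (x - ys!i - 1) * exp (eps (zs!i) * of_real t)))"
proof -
  obtain M where "summable M"
    and "\<And>n zs. zs \<in> torus r (length ys) \<Longrightarrow> cmod (of_real (t ^ n / fact n) * moment_integrand x n ys zs) \<le> M n"
    using moment_integrand_majorant[OF assms] by blast
  then show ?thesis
    unfolding moment_def circ_int_n_cmult[symmetric]
    by (intro circ_int_n_sums moment_integrand_sums torus_continuous_intros torus_continuous_I_fun
          torus_continuous_moment_integrand torus_continuous_eps r_nonneg)
       (auto simp: r_pos)
qed

lemma leftmost_prob_sorted:
  assumes "sorted_wrt (\<ge>) ys" "ys \<noteq> []" "t \<ge> 0"
  shows "complex_of_real (leftmost_prob q (mset ys) t x) =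
    circ_int_n r (length ys) (\<lambda>zs. I_fun q (length ys) zs *
       (\<Prod>i<length ys. (zs!i) powi (x - ys!i - 1) * exp (eps (zs!i) * of_real t)))"
    (is "_ = ?integral")
proof -
  define a where "a n = t ^ n / fact n * (tazrp_gen q ^^ n) (\<lambda>X. if Min (set_mset X) = x then 1 else 0) (mset ys)"
    for n
  have "(\<lambda>n. complex_of_real (a n)) = (\<lambda>n. of_real (t ^ n / fact n) * moment x n ys)"
    using tazrp_gen_power_eq_moment_mset[of "mset ys" _ x] assms(1,2)
    by (simp add: fun_eq_iff a_def moment_mset_def desc_list_mset)
  then have integral: "(\<lambda>n. complex_of_real (a n)) sums ?integral"
    using sums_moment[OF assms(3), of x ys] by (simp only:)
  then have "summable a"
    using summable_complex_of_real sums_summable by blast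
  then have "(\<lambda>n. complex_of_real (a n)) sums complex_of_real (suminf a)"
    by (intro sums_of_real summable_sums)
  with integral show ?thesis
    unfolding leftmost_prob_def tazrp_expect_def a_def by (rule sums_unique2[symmetric])
qed

end

theorem theorem2:
  fixes N :: nat and q r t :: real and y :: "nat \<Rightarrow> int" and x :: int
  assumes "N \<ge> 1"
    and "0 < \<bar>q\<bar>" and "\<bar>q\<bar> < 1"
    and "0 < r" and "r < (1 - \<bar>q\<bar>) / \<bar>1 - q\<bar>"
    and "\<forall>i\<in>{1..<N}. y (Suc i) \<le> y i"
    and "t \<ge> 0"
  shows "complex_of_real (leftmost_prob q (mset (map y [1..<Suc N])) t x) =
    circ_int_n r N (\<lambda>zs. I_fun q N zs *
       (\<Prod>i<N. (zs!i) powi (x - y (Suc i) - 1) * exp (eps (zs!i) * of_real t)))"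
proof -
  interpret admissible_radius q r
    using assms(2-5) by unfold_locales
  define ys where "ys = map y [1..<Suc N]"
  have len: "length ys = N" and nth: "\<And>i. i < N \<Longrightarrow> ys ! i = y (Suc i)"
    by (simp_all add: ys_def del: upt_Suc)
  have "sorted_wrt (\<ge>) ys"
    unfolding sorted_wrt_iff_nth_Suc_transp[OF transp_on_ge] using assms(6) len nth by auto
  moreover have "ys \<noteq> []"
    using len assms(1) by auto
  ultimately have "complex_of_real (leftmost_prob q (mset ys) t x) =
      circ_int_n r N (\<lambda>zs. I_fun q N zs *
        (\<Prod>i<N. (zs!i) powi (x - ys ! i - 1) * exp (eps (zs!i) * of_real t)))"
    using leftmost_prob_sorted[OF _ _ assms(7)] len by simp
  moreover have "(\<Prod>i<N. (zs!i) powi (x - ys ! i - 1) * exp (eps (zs!i) * of_real t)) =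
      (\<Prod>i<N. (zs!i) powi (x - y (Suc i) - 1) * exp (eps (zs!i) * of_real t))" for zs
    by (rule prod.cong) (simp_all add: nth)
  ultimately show ?thesis
    unfolding ys_def by simp
qed

end
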